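(* For every bipartite quantum channel $\mathcal{N}_{A'B'\to AB}$, $$E_{\kappa,A}(\mathcal{N})\le E_\kappa(\mathcal{N}),$$ where $E_{\kappa,A}(\mathcal{N})=\sup_{\rho_{L_AA'B'L_B}}\big[E_\kappa(L_AA;BL_B)_{\mathcal{N}(\rho)}-E_\kappa(L_AA';B'L_B)_\rho\big]$, the supremum being over all states $\rho_{L_AA'B'L_B}$ with $L_A,L_B$ finite-dimensional of arbitrary size.
   Context: $T_X$ is partial transpose on $X$. For a bipartite state $\rho_{CD}$, $E_\kappa(C;D)_\rho=\log W_\kappa(C;D)_\rho$ with $W_\kappa(C;D)_\rho=\inf\{\operatorname{Tr}S_{CD}: S_{CD}\ge0,\ -T_D(S_{CD})\le T_D(\rho_{CD})\le T_D(S_{CD})\}$. For a bipartite channel $\mathcal{N}_{A'B'\to AB}$ with Choi operator $J^{\mathcal{N}}_{L'_AABL'_B}=\mathcal{N}(|\Upsilon\rangle\langle\Upsilon|_{L'_AA'}\otimes|\Upsilon\rangle\langle\Upsilon|_{B'L'_B})$ ($|\Upsilon\rangle_{XY}=\sum_i|i\rangle_X|i\rangle_Y$, $L'_A\simeq A'$, $L'_B\simeq B'$), $E_\kappa(\mathcal{N})=\log\inf\{\|\operatorname{Tr}_{AB}Q_{L'_AABL'_B}\|_\infty: Q\ge0,\ -T_{BL'_B}(Q)\le T_{BL'_B}(J^{\mathcal{N}})\le T_{BL'_B}(Q)\}$. *)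

theory Defs
  imports Complex_Main "Jordan_Normal_Form.Matrix" "HOL-Library.Extended_Real"
begin

text \<open>Composite indices follow the Kronecker (tensor) convention: for systems
  X (dim dx) and Y (dim dy) the basis vector |x>|y> has index x*dy + y; for more systems this
  is nested, e.g. |w>|x>|y>|z> has index ((w*dx + x)*dy + y)*dz + z.\<close>

definition tr :: "complex mat \<Rightarrow> complex" where
  "tr M = (\<Sum>i<dim_row M. M $$ (i,i))"

definition psd :: "complex mat \<Rightarrow> bool" where
  "psd M \<longleftrightarrow> M \<in> carrier_mat (dim_row M) (dim_row M) \<and>
     (\<forall>v \<in> carrier_vec (dim_row M).
        Im ((M *\<^sub>v v) \<bullet>c v) = 0 \<and> 0 \<le> Re ((M *\<^sub>v v) \<bullet>c v))"

definition loewner_le :: "complex mat \<Rightarrow> complex mat \<Rightarrow> bool" where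
  "loewner_le X Y \<longleftrightarrow> dim_row X = dim_row Y \<and> dim_col X = dim_col Y \<and> psd (Y - X)"

definition is_state :: "nat \<Rightarrow> complex mat \<Rightarrow> bool" where
  "is_state d \<rho> \<longleftrightarrow> \<rho> \<in> carrier_mat d d \<and> psd \<rho> \<and> tr \<rho> = 1"

text \<open>Partial transpose on the second factor D (dim dd) of a bipartite operator on C \<otimes> D.\<close>
definition ptrans2 :: "nat \<Rightarrow> nat \<Rightarrow> complex mat \<Rightarrow> complex mat" where
  "ptrans2 dc dd M = mat (dc*dd) (dc*dd)
     (\<lambda>(r,c). M $$ ((r div dd)*dd + c mod dd, (c div dd)*dd + r mod dd))"

text \<open>Partial trace over the middle system M (dim dm) of an operator on L \<otimes> M \<otimes> R.\<close>
definition ptrace_mid :: "nat \<Rightarrow> nat \<Rightarrow> nat \<Rightarrow> complex mat \<Rightarrow> complex mat" where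
  "ptrace_mid dl dm dr X = mat (dl*dr) (dl*dr)
     (\<lambda>(i,j). \<Sum>k<dm. X $$ (((i div dr)*dm + k)*dr + i mod dr, ((j div dr)*dm + k)*dr + j mod dr))"

definition vnorm :: "complex vec \<Rightarrow> real" where
  "vnorm v = sqrt (\<Sum>i<dim_vec v. (cmod (v $ i))\<^sup>2)"

definition opnorm :: "complex mat \<Rightarrow> real" where
  "opnorm M = Sup {vnorm (M *\<^sub>v v) | v. v \<in> carrier_vec (dim_col M) \<and> vnorm v \<le> 1}"

text \<open>(id_L \<otimes> N \<otimes> id_R)(X) for X on L \<otimes> D_in \<otimes> R (dims dl, din, dr), where N maps
  din x din matrices to dout x dout matrices. Defined blockwise:
  X = \<Sum> |a c><b e| \<otimes> X_(a c),(b e)  is sent to  \<Sum> |a c><b e| \<otimes> N(X_(a c),(b e)),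
  which agrees with id \<otimes> N \<otimes> id for linear N.\<close>
definition ext_id :: "nat \<Rightarrow> nat \<Rightarrow> nat \<Rightarrow> nat \<Rightarrow> (complex mat \<Rightarrow> complex mat) \<Rightarrow> complex mat \<Rightarrow> complex mat" where
  "ext_id dl dr din dout N X = mat (dl*dout*dr) (dl*dout*dr)
     (\<lambda>(r,c). let a = r div (dout*dr); i = (r div dr) mod dout; ce = r mod dr;
                  b = c div (dout*dr); j = (c div dr) mod dout; e = c mod dr
              in N (mat din din (\<lambda>(p,q). X $$ ((a*din + p)*dr + ce, (b*din + q)*dr + e))) $$ (i,j))"

definition is_bipartite_channel ::
  "nat \<Rightarrow> nat \<Rightarrow> nat \<Rightarrow> nat \<Rightarrow> (complex mat \<Rightarrow> complex mat) \<Rightarrow> bool" where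
  "is_bipartite_channel dA' dB' dA dB N \<longleftrightarrow>
     0 < dA' \<and> 0 < dB' \<and> 0 < dA \<and> 0 < dB \<and>
     (\<forall>X \<in> carrier_mat (dA'*dB') (dA'*dB'). N X \<in> carrier_mat (dA*dB) (dA*dB)) \<and>
     (\<forall>X \<in> carrier_mat (dA'*dB') (dA'*dB'). \<forall>Y \<in> carrier_mat (dA'*dB') (dA'*dB').
        \<forall>a b. N (a \<cdot>\<^sub>m X + b \<cdot>\<^sub>m Y) = a \<cdot>\<^sub>m N X + b \<cdot>\<^sub>m N Y) \<and>
     (\<forall>X \<in> carrier_mat (dA'*dB') (dA'*dB'). tr (N X) = tr X) \<and>
     (\<forall>k. \<forall>X \<in> carrier_mat (k*(dA'*dB')) (k*(dA'*dB')).
        psd X \<longrightarrow> psd (ext_id k 1 (dA'*dB') (dA*dB) N X))"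

definition W_kappa :: "nat \<Rightarrow> nat \<Rightarrow> complex mat \<Rightarrow> real" where
  "W_kappa dc dd \<rho> = Inf {Re (tr S) | S. S \<in> carrier_mat (dc*dd) (dc*dd) \<and> psd S \<and>
       loewner_le (- ptrans2 dc dd S) (ptrans2 dc dd \<rho>) \<and>
       loewner_le (ptrans2 dc dd \<rho>) (ptrans2 dc dd S)}"

definition E_kappa_state :: "nat \<Rightarrow> nat \<Rightarrow> complex mat \<Rightarrow> real" where
  "E_kappa_state dc dd \<rho> = log 2 (W_kappa dc dd \<rho>)"

text \<open>Unnormalized maximally entangled operator |Upsilon><Upsilon| on L'_A A' \<otimes> B' L'_B,
  with L'_A \<simeq> A' (dim dA') and L'_B \<simeq> B' (dim dB'), ordered L'_A A' B' L'_B.\<close>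
definition choi_input :: "nat \<Rightarrow> nat \<Rightarrow> complex mat" where
  "choi_input dA' dB' = mat (dA'*dA'*dB'*dB') (dA'*dA'*dB'*dB')
     (\<lambda>(r,c). let l = r div (dA'*dB'*dB'); a = (r div (dB'*dB')) mod dA';
                  b = (r div dB') mod dB'; m = r mod dB';
                  l2 = c div (dA'*dB'*dB'); a2 = (c div (dB'*dB')) mod dA';
                  b2 = (c div dB') mod dB'; m2 = c mod dB'
              in if l = a \<and> l2 = a2 \<and> b = m \<and> b2 = m2 then 1 else 0)"

text \<open>Choi operator J^N on L'_A A B L'_B.\<close>
definition choi :: "nat \<Rightarrow> nat \<Rightarrow> nat \<Rightarrow> nat \<Rightarrow> (complex mat \<Rightarrow> complex mat) \<Rightarrow> complex mat" where
  "choi dA' dB' dA dB N = ext_id dA' dB' (dA'*dB') (dA*dB) N (choi_input dA' dB')"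

text \<open>E_kappa of a bipartite channel; partial transpose on B L'_B is the partial transpose of
  the second factor in the split (L'_A A) | (B L'_B).\<close>
definition E_kappa_channel :: "nat \<Rightarrow> nat \<Rightarrow> nat \<Rightarrow> nat \<Rightarrow> (complex mat \<Rightarrow> complex mat) \<Rightarrow> real" where
  "E_kappa_channel dA' dB' dA dB N = log 2 (Inf
     {opnorm (ptrace_mid dA' (dA*dB) dB' Q) | Q.
        Q \<in> carrier_mat (dA'*dA*dB*dB') (dA'*dA*dB*dB') \<and> psd Q \<and>
        loewner_le (- ptrans2 (dA'*dA) (dB*dB') Q) (ptrans2 (dA'*dA) (dB*dB') (choi dA' dB' dA dB N)) \<and>
        loewner_le (ptrans2 (dA'*dA) (dB*dB') (choi dA' dB' dA dB N)) (ptrans2 (dA'*dA) (dB*dB') Q)})"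

definition E_kappa_A_channel :: "nat \<Rightarrow> nat \<Rightarrow> nat \<Rightarrow> nat \<Rightarrow> (complex mat \<Rightarrow> complex mat) \<Rightarrow> ereal" where
  "E_kappa_A_channel dA' dB' dA dB N =
     (SUP p \<in> {(lA, lB, \<rho>) | lA lB \<rho>. is_state (lA*dA'*dB'*lB) \<rho>}.
        (case p of (lA, lB, \<rho>) \<Rightarrow>
          ereal (E_kappa_state (lA*dA) (dB*lB) (ext_id lA lB (dA'*dB') (dA*dB) N \<rho>)
                 - E_kappa_state (lA*dA') (dB'*lB) \<rho>)))"

end

theory Submission
  imports Defs "HOL-Analysis.L2_Norm"
begin

text \<open>Let \<open>S\<close> be feasible for \<open>W\<^sub>\<kappa>(L\<^sub>AA';B'L\<^sub>B)\<^sub>\<rho>\<close>, i.e. \<open>S \<ge> 0\<close> and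
  \<open>-S\<^sup>\<Gamma> \<le> \<rho>\<^sup>\<Gamma> \<le> S\<^sup>\<Gamma>\<close>, and let \<open>Q\<close> be feasible for \<open>E\<^sub>\<kappa>(\<N>)\<close>, i.e. \<open>Q \<ge> 0\<close> and
  \<open>-Q\<^sup>\<Gamma> \<le> J\<^sup>\<Gamma> \<le> Q\<^sup>\<Gamma>\<close> for the Choi operator \<open>J\<close>. The output \<open>\<N>(\<rho>)\<close> is the link
  product \<open>\<rho> * J\<close> over \<open>A'B'\<close>, the link product of positive operators is positive, and
  partial transposition commutes with it; expanding the positive products
  \<open>(S\<^sup>\<Gamma> \<plusminus> \<rho>\<^sup>\<Gamma>) * (Q\<^sup>\<Gamma> \<plusminus> J\<^sup>\<Gamma>)\<close> therefore shows that \<open>S * Q\<close> is feasible for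
  \<open>W\<^sub>\<kappa>(L\<^sub>AA;BL\<^sub>B)\<^bsub>\<N>(\<rho>)\<^esub>\<close>. Its trace is at most \<open>\<parallel>Tr\<^sub>A\<^sub>B Q\<parallel>\<^sub>\<infinity> Tr S\<close>, so
  \<open>W\<^sub>\<kappa>(\<N>(\<rho>)) \<le> \<parallel>Tr\<^sub>A\<^sub>B Q\<parallel>\<^sub>\<infinity> W\<^sub>\<kappa>(\<rho>)\<close>, and taking infima and logarithms gives
  the claim. Positivity is handled on kernels \<open>I \<Rightarrow> I \<Rightarrow> complex\<close> indexed by tuples of
  subsystem indices, where link products and partial transposes are reindexed sums.\<close>

section \<open>Positive semidefinite kernels\<close>

definition quad_form :: "'i set \<Rightarrow> ('i \<Rightarrow> 'i \<Rightarrow> complex) \<Rightarrow> ('i \<Rightarrow> complex) \<Rightarrow> complex" where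
  "quad_form I K v = (\<Sum>i\<in>I. \<Sum>j\<in>I. cnj (v i) * K i j * v j)"

definition psd_kernel :: "'i set \<Rightarrow> ('i \<Rightarrow> 'i \<Rightarrow> complex) \<Rightarrow> bool" where
  "psd_kernel I K \<longleftrightarrow> (\<forall>v. 0 \<le> quad_form I K v)"

definition sesq_form :: "'i set \<Rightarrow> ('i \<Rightarrow> 'i \<Rightarrow> complex) \<Rightarrow> ('i \<Rightarrow> complex) \<Rightarrow> ('i \<Rightarrow> complex) \<Rightarrow> complex" where
  "sesq_form I K u v = (\<Sum>i\<in>I. \<Sum>j\<in>I. cnj (u i) * K i j * v j)"

definition point_fun :: "'i \<Rightarrow> complex \<Rightarrow> 'i \<Rightarrow> complex" where
  "point_fun k a = (\<lambda>x. if x = k then a else 0)"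

lemma complex_nonneg_iff: "0 \<le> (z::complex) \<longleftrightarrow> Im z = 0 \<and> 0 \<le> Re z"
  by (auto simp: less_eq_complex_def)

lemma mult_cnj_self_nonneg: "0 \<le> (w::complex) * cnj w"
  by (simp add: complex_mult_cnj less_eq_complex_def)

lemma quad_form_cong:
  "(\<And>i j. i\<in>I \<Longrightarrow> j\<in>I \<Longrightarrow> K i j = K' i j) \<Longrightarrow> quad_form I K v = quad_form I K' v"
  unfolding quad_form_def by (intro sum.cong refl) auto

lemma quad_form_cong_vec: "(\<And>i. i \<in> I \<Longrightarrow> v i = w i) \<Longrightarrow> quad_form I K v = quad_form I K w"
  unfolding quad_form_def by (intro sum.cong refl) auto

lemma psd_kernel_cong:
  "(\<And>i j. i\<in>I \<Longrightarrow> j\<in>I \<Longrightarrow> K i j = K' i j) \<Longrightarrow> psd_kernel I K = psd_kernel I K'"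
  unfolding psd_kernel_def using quad_form_cong by metis

lemma quad_form_add: "quad_form I (\<lambda>i j. K i j + L i j) v = quad_form I K v + quad_form I L v"
  unfolding quad_form_def by (simp add: sum.distrib algebra_simps)

lemma quad_form_diff: "quad_form I (\<lambda>i j. K i j - L i j) v = quad_form I K v - quad_form I L v"
  unfolding quad_form_def by (simp add: sum_subtractf algebra_simps)

lemma quad_form_scale: "quad_form I (\<lambda>i j. c * K i j) v = c * quad_form I K v"
  unfolding quad_form_def by (simp add: sum_distrib_left algebra_simps)

lemma quad_form_rank_one:
  "quad_form I (\<lambda>i j. a i * cnj (a j)) v = (\<Sum>i\<in>I. cnj (v i) * a i) * cnj (\<Sum>i\<in>I. cnj (v i) * a i)"
  unfolding quad_form_def by (simp add: sum_product mult.commute mult.left_commute)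

lemma quad_form_sesq: "quad_form I K v = sesq_form I K v v"
  unfolding quad_form_def sesq_form_def ..

lemma sesq_form_add_left: "sesq_form I K (\<lambda>x. u x + u' x) v = sesq_form I K u v + sesq_form I K u' v"
  unfolding sesq_form_def by (simp add: sum.distrib algebra_simps)

lemma sesq_form_add_right: "sesq_form I K u (\<lambda>x. v x + v' x) = sesq_form I K u v + sesq_form I K u v'"
  unfolding sesq_form_def by (simp add: sum.distrib algebra_simps)

lemma sesq_form_point_right:
  "finite I \<Longrightarrow> k \<in> I \<Longrightarrow> sesq_form I K u (point_fun k a) = (\<Sum>i\<in>I. cnj (u i) * K i k) * a"
  unfolding sesq_form_def point_fun_def
  by (simp add: sum_distrib_right if_distrib sum.delta' cong: if_cong)

lemma sesq_form_point_left:
  assumes "finite I" "k \<in> I"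
  shows "sesq_form I K (point_fun k a) v = cnj a * (\<Sum>j\<in>I. K k j * v j)"
proof -
  have "sesq_form I K (point_fun k a) v = (\<Sum>i\<in>I. if i = k then (\<Sum>j\<in>I. cnj a * K k j * v j) else 0)"
    unfolding sesq_form_def point_fun_def by (intro sum.cong) auto
  also have "\<dots> = cnj a * (\<Sum>j\<in>I. K k j * v j)"
    using assms by (simp add: sum.delta' sum_distrib_left mult.assoc)
  finally show ?thesis .
qed

lemma sesq_form_point_point:
  "finite I \<Longrightarrow> k \<in> I \<Longrightarrow> l \<in> I \<Longrightarrow> sesq_form I K (point_fun k a) (point_fun l b) = cnj a * K k l * b"
  by (simp add: sesq_form_point_left) (simp add: point_fun_def if_distrib sum.delta' cong: if_cong)

lemma quad_form_point: "finite I \<Longrightarrow> i \<in> I \<Longrightarrow> quad_form I K (point_fun i a) = cnj a * K i i * a"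
  unfolding quad_form_sesq by (simp add: sesq_form_point_point)

lemma quad_form_two_points:
  assumes "finite I" "i \<in> I" "j \<in> I"
  shows "quad_form I K (\<lambda>x. point_fun i a x + point_fun j b x) =
    cnj a * K i i * a + cnj a * K i j * b + cnj b * K j i * a + cnj b * K j j * b"
  unfolding quad_form_sesq sesq_form_add_left sesq_form_add_right
  using assms by (simp add: sesq_form_point_point)

lemma quad_form_hermitian_real:
  assumes "\<And>x y. x\<in>B \<Longrightarrow> y\<in>B \<Longrightarrow> H y x = cnj (H x y)"
  shows "cnj (quad_form B H v) = quad_form B H v"
proof -
  have "cnj (quad_form B H v) = (\<Sum>x\<in>B. \<Sum>y\<in>B. v x * cnj (H x y) * cnj (v y))"
    unfolding quad_form_def by simp
  also have "\<dots> = (\<Sum>x\<in>B. \<Sum>y\<in>B. cnj (v y) * H y x * v x)"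
  proof (intro sum.cong refl)
    fix x y assume "x \<in> B" "y \<in> B"
    hence "H y x = cnj (H x y)" by (rule assms)
    thus "v x * cnj (H x y) * cnj (v y) = cnj (v y) * H y x * v x" by (simp add: mult_ac)
  qed
  also have "\<dots> = quad_form B H v" unfolding quad_form_def by (rule sum.swap)
  finally show ?thesis .
qed

lemma psd_kernel_add: "psd_kernel I K \<Longrightarrow> psd_kernel I L \<Longrightarrow> psd_kernel I (\<lambda>i j. K i j + L i j)"
  unfolding psd_kernel_def quad_form_add by (simp add: add_nonneg_nonneg)

lemma psd_kernel_scale: "0 \<le> c \<Longrightarrow> psd_kernel I K \<Longrightarrow> psd_kernel I (\<lambda>i j. c * K i j)"
  unfolding psd_kernel_def quad_form_scale by (simp add: mult_nonneg_nonneg)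

lemma psd_kernel_gram:
  assumes "finite I" "finite T"
    and "\<And>i j. i\<in>I \<Longrightarrow> j\<in>I \<Longrightarrow> K i j = (\<Sum>t\<in>T. z t i * cnj (z t j))"
  shows "psd_kernel I K"
  unfolding psd_kernel_def
proof
  fix v
  have "quad_form I K v = (\<Sum>i\<in>I. \<Sum>j\<in>I. \<Sum>t\<in>T. cnj (v i) * z t i * (cnj (z t j) * v j))"
    unfolding quad_form_def using assms(3)
    by (intro sum.cong refl) (simp add: sum_distrib_left sum_distrib_right mult.assoc)
  also have "\<dots> = (\<Sum>i\<in>I. \<Sum>t\<in>T. \<Sum>j\<in>I. cnj (v i) * z t i * (cnj (z t j) * v j))"
    by (intro sum.cong refl sum.swap)
  also have "\<dots> = (\<Sum>t\<in>T. \<Sum>i\<in>I. \<Sum>j\<in>I. cnj (v i) * z t i * (cnj (z t j) * v j))"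
    by (rule sum.swap)
  also have "\<dots> = (\<Sum>t\<in>T. (\<Sum>i\<in>I. cnj (v i) * z t i) * (\<Sum>j\<in>I. cnj (z t j) * v j))"
    by (simp only: sum_product)
  also have "\<dots> = (\<Sum>t\<in>T. (\<Sum>i\<in>I. cnj (v i) * z t i) * cnj (\<Sum>j\<in>I. cnj (v j) * z t j))"
    by (simp add: mult.commute)
  also have "0 \<le> \<dots>"
    by (intro sum_nonneg mult_cnj_self_nonneg)
  finally show "0 \<le> quad_form I K v" .
qed

lemma psd_kernel_identity:
  assumes f: "finite B"
  shows "psd_kernel B (\<lambda>x y. if x = y then 1 else 0)"
proof (rule psd_kernel_gram[where T=B and z="\<lambda>t x. if x = t then 1 else 0", OF f f])
  fix i j assume "i \<in> B" "j \<in> B"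
  have "(\<Sum>t\<in>B. (if i = t then 1 else 0) * cnj (if j = t then 1 else 0))
      = (\<Sum>t\<in>B. if t = i then (if j = i then 1 else 0) else (0::complex))"
    by (intro sum.cong refl) auto
  also have "\<dots> = (if i = j then 1 else 0)" using f \<open>i \<in> B\<close> by (simp add: sum.delta')
  finally show "(if i = j then 1 else 0)
      = (\<Sum>t\<in>B. (if i = t then 1 else 0) * cnj (if j = t then 1 else 0))" by simp
qed

lemma psd_kernel_diag_nonneg: "psd_kernel I K \<Longrightarrow> finite I \<Longrightarrow> i \<in> I \<Longrightarrow> 0 \<le> K i i"
  using quad_form_point[of I i K 1] unfolding psd_kernel_def
  by (metis complex_cnj_one mult_1 mult_1_right)

lemma psd_kernel_hermitian:
  assumes K: "psd_kernel I K" and f: "finite I" and i: "i \<in> I" and j: "j \<in> I"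
  shows "K j i = cnj (K i j)"
proof -
  have di: "Im (K i i) = 0" and dj: "Im (K j j) = 0"
    using psd_kernel_diag_nonneg[OF K f] i j complex_nonneg_iff by blast+
  have "0 \<le> quad_form I K (\<lambda>x. point_fun i 1 x + point_fun j 1 x)" using K psd_kernel_def by blast
  hence 1: "Im (K i j + K j i) = 0"
    using quad_form_two_points[OF f i j, of K 1 1] di dj by (simp add: complex_nonneg_iff)
  have "0 \<le> quad_form I K (\<lambda>x. point_fun i 1 x + point_fun j \<i> x)" using K psd_kernel_def by blast
  hence 2: "Re (K i j) = Re (K j i)"
    using quad_form_two_points[OF f i j, of K 1 \<i>] di dj by (simp add: complex_nonneg_iff)
  show ?thesis using 1 2 by (simp add: complex_eq_iff)
qed

lemma psd_kernel_zero_diag: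
  assumes K: "psd_kernel I K" and f: "finite I" and i: "i \<in> I" and j: "j \<in> I"
    and z: "K i i = 0" "K j j = 0"
  shows "K i j = 0"
proof (cases "i = j")
  case True thus ?thesis using z by simp
next
  case False
  let ?t = "- cnj (K i j)"
  have h: "K j i = cnj (K i j)" using psd_kernel_hermitian[OF K f i j] .
  have "0 \<le> quad_form I K (\<lambda>x. point_fun i 1 x + point_fun j ?t x)" using K psd_kernel_def by blast
  also have "quad_form I K (\<lambda>x. point_fun i 1 x + point_fun j ?t x) = - 2 * (K i j * cnj (K i j))"
    using quad_form_two_points[OF f i j, of K 1 ?t] z h by simp
  finally have "K i j * cnj (K i j) \<le> 0" by (simp add: less_eq_complex_def)
  moreover have "0 \<le> K i j * cnj (K i j)" by (rule mult_cnj_self_nonneg)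
  ultimately have "K i j * cnj (K i j) = 0" by (rule order_antisym)
  thus ?thesis by simp
qed

text \<open>One step of a Cholesky factorisation: subtracting the rank-one kernel built from a
  column with nonzero pivot keeps the kernel positive and kills the pivot.\<close>

lemma psd_kernel_subtract_rank_one:
  assumes K: "psd_kernel I K" and f: "finite I" and k: "k \<in> I" and nz: "K k k \<noteq> 0"
  obtains a where "psd_kernel I (\<lambda>i j. K i j - a i * cnj (a j))" "a k * cnj (a k) = K k k"
proof -
  define d where "d = Re (K k k)"
  define a where "a = (\<lambda>i. K i k / complex_of_real (sqrt d))"
  have kk: "K k k = complex_of_real d" using psd_kernel_diag_nonneg[OF K f k] unfolding d_def
    by (simp add: complex_eq_iff less_eq_complex_def)
  have dpos: "d > 0" using psd_kernel_diag_nonneg[OF K f k] nz unfolding d_def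
    by (auto simp: complex_eq_iff less_eq_complex_def)
  have sqd: "complex_of_real (sqrt d) * complex_of_real (sqrt d) = complex_of_real d"
    using dpos by (simp flip: of_real_mult)
  have "psd_kernel I (\<lambda>i j. K i j - a i * cnj (a j))"
    unfolding psd_kernel_def
  proof
    fix v
    define s where "s = (\<Sum>j\<in>I. K k j * v j)"
    define t where "t = - s / complex_of_real d"
    have cs: "(\<Sum>i\<in>I. cnj (v i) * K i k) = cnj s"
      unfolding s_def using psd_kernel_hermitian[OF K f k] by (simp add: mult.commute)
    have rank_one: "quad_form I (\<lambda>i j. a i * cnj (a j)) v = cnj s * s / complex_of_real d"
    proof -
      have "(\<Sum>i\<in>I. cnj (v i) * a i) = cnj s / complex_of_real (sqrt d)"
        unfolding a_def cs[symmetric] by (simp add: sum_divide_distrib)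
      thus ?thesis unfolding quad_form_rank_one using sqd by simp
    qed
    have "0 \<le> quad_form I K (\<lambda>x. v x + point_fun k t x)" using K psd_kernel_def by blast
    also have "quad_form I K (\<lambda>x. v x + point_fun k t x)
        = quad_form I K v + cnj s * t + cnj t * s + cnj t * K k k * t"
      unfolding quad_form_sesq sesq_form_add_left sesq_form_add_right sesq_form_point_point[OF f k k]
      using f k by (simp add: sesq_form_point_right sesq_form_point_left sesq_form_point_point
          cs s_def[symmetric])
    also have "\<dots> = quad_form I K v - cnj s * s / complex_of_real d"
      unfolding t_def kk using dpos by (simp add: field_simps)
    finally show "0 \<le> quad_form I (\<lambda>i j. K i j - a i * cnj (a j)) v"
      unfolding quad_form_diff rank_one .
  qed
  moreover have "a k * cnj (a k) = K k k"
    unfolding a_def using sqd by (simp add: kk)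
  ultimately show ?thesis using that by blast
qed

lemma psd_kernel_gram_decomp:
  assumes f: "finite I" and K: "psd_kernel I K"
  shows "\<exists>(n::nat) a. \<forall>i\<in>I. \<forall>j\<in>I. K i j = (\<Sum>t<n. a t i * cnj (a t j))"
  using K
proof (induction "card {i\<in>I. K i i \<noteq> 0}" arbitrary: K rule: less_induct)
  case less
  show ?case
  proof (cases "\<exists>k\<in>I. K k k \<noteq> 0")
    case False
    hence "\<forall>i\<in>I. \<forall>j\<in>I. K i j = 0"
      using psd_kernel_zero_diag[OF less.prems f] by auto
    thus ?thesis by (intro exI[of _ 0] exI[of _ "\<lambda>t i. 0"]) simp
  next
    case True
    then obtain k where k: "k \<in> I" "K k k \<noteq> 0" by blast
    obtain a where K': "psd_kernel I (\<lambda>i j. K i j - a i * cnj (a j))"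
      and akk: "a k * cnj (a k) = K k k"
      using psd_kernel_subtract_rank_one[OF less.prems f k] .
    define K' where "K' = (\<lambda>i j. K i j - a i * cnj (a j))"
    have psd_rest: "psd_kernel I K'" using K' unfolding K'_def .
    have "{i\<in>I. K' i i \<noteq> 0} \<subseteq> {i\<in>I. K i i \<noteq> 0} - {k}"
    proof
      fix i assume i: "i \<in> {i\<in>I. K' i i \<noteq> 0}"
      have "0 \<le> K' i i" using psd_kernel_diag_nonneg[OF psd_rest f] i by auto
      hence "K i i \<noteq> 0"
        using i order_antisym[OF _ mult_cnj_self_nonneg[of "a i"]] unfolding K'_def by auto
      thus "i \<in> {i\<in>I. K i i \<noteq> 0} - {k}" using i akk unfolding K'_def by auto
    qed
    hence "card {i\<in>I. K' i i \<noteq> 0} \<le> card ({i\<in>I. K i i \<noteq> 0} - {k})"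
      using f by (intro card_mono) auto
    also have "\<dots> < card {i\<in>I. K i i \<noteq> 0}"
      using k f by (intro card_Diff1_less) auto
    finally have "card {i\<in>I. K' i i \<noteq> 0} < card {i\<in>I. K i i \<noteq> 0}" .
    from less.hyps[of K', OF this psd_rest] obtain n :: nat and b where
      nb: "\<forall>i\<in>I. \<forall>j\<in>I. K' i j = (\<Sum>t<n. b t i * cnj (b t j))" by blast
    define c where "c = (\<lambda>t. if t < n then b t else a)"
    have "\<forall>i\<in>I. \<forall>j\<in>I. K i j = (\<Sum>t<Suc n. c t i * cnj (c t j))"
    proof (intro ballI)
      fix i j assume "i \<in> I" "j \<in> I"
      hence "K i j = K' i j + a i * cnj (a j)" unfolding K'_def by simp
      also have "\<dots> = (\<Sum>t<n. c t i * cnj (c t j)) + c n i * cnj (c n j)"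
        using nb \<open>i \<in> I\<close> \<open>j \<in> I\<close> unfolding c_def by simp
      finally show "K i j = (\<Sum>t<Suc n. c t i * cnj (c t j))" by simp
    qed
    thus ?thesis by blast
  qed
qed

lemma psd_kernel_contract_product:
  assumes fOb: "finite Ob" and fP: "finite P" and fI: "finite I" and fJ: "finite J"
    and X: "psd_kernel I X" and Y: "psd_kernel J Y"
    and hX: "\<And>u c. u \<in> Ob \<Longrightarrow> c \<in> P \<Longrightarrow> fX u c \<in> I"
    and hY: "\<And>u c. u \<in> Ob \<Longrightarrow> c \<in> P \<Longrightarrow> fY u c \<in> J"
  shows "psd_kernel Ob (\<lambda>u u2. \<Sum>c\<in>P. \<Sum>c'\<in>P. X (fX u c) (fX u2 c') * Y (fY u c) (fY u2 c'))"
proof -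
  obtain n1 :: nat and x where x: "\<forall>i\<in>I. \<forall>j\<in>I. X i j = (\<Sum>t<n1. x t i * cnj (x t j))"
    using psd_kernel_gram_decomp[OF fI X] by blast
  obtain n2 :: nat and y where y: "\<forall>i\<in>J. \<forall>j\<in>J. Y i j = (\<Sum>t<n2. y t i * cnj (y t j))"
    using psd_kernel_gram_decomp[OF fJ Y] by blast
  define z where "z = (\<lambda>(t1,t2) u. \<Sum>c\<in>P. x t1 (fX u c) * y t2 (fY u c))"
  show ?thesis
  proof (rule psd_kernel_gram[OF fOb, of "{..<n1} \<times> {..<n2}" _ z])
    fix u u2 assume u: "u \<in> Ob" and u2: "u2 \<in> Ob"
    have "(\<Sum>t\<in>{..<n1} \<times> {..<n2}. z t u * cnj (z t u2)) =
      (\<Sum>t1<n1. \<Sum>t2<n2. (\<Sum>c\<in>P. x t1 (fX u c) * y t2 (fY u c)) *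
         (\<Sum>c'\<in>P. cnj (x t1 (fX u2 c')) * cnj (y t2 (fY u2 c'))))"
      unfolding sum.cartesian_product
      by (intro sum.cong refl) (auto simp: z_def cnj_sum)
    also have "\<dots> = (\<Sum>t1<n1. \<Sum>t2<n2. \<Sum>c\<in>P. \<Sum>c'\<in>P.
         (x t1 (fX u c) * cnj (x t1 (fX u2 c'))) * (y t2 (fY u c) * cnj (y t2 (fY u2 c'))))"
      by (simp add: sum_product mult_ac)
    also have "\<dots> = (\<Sum>c\<in>P. \<Sum>c'\<in>P. (\<Sum>t1<n1. x t1 (fX u c) * cnj (x t1 (fX u2 c'))) *
         (\<Sum>t2<n2. y t2 (fY u c) * cnj (y t2 (fY u2 c'))))"
      unfolding sum_product
    proof -
      let ?f = "\<lambda>c c' t1 t2. x t1 (fX u c) * cnj (x t1 (fX u2 c')) * (y t2 (fY u c) * cnj (y t2 (fY u2 c')))"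
      have "(\<Sum>c\<in>P. \<Sum>c'\<in>P. \<Sum>t1<n1. \<Sum>t2<n2. ?f c c' t1 t2) = (\<Sum>c\<in>P. \<Sum>t1<n1. \<Sum>c'\<in>P. \<Sum>t2<n2. ?f c c' t1 t2)"
        by (intro sum.cong refl sum.swap)
      also have "\<dots> = (\<Sum>t1<n1. \<Sum>c\<in>P. \<Sum>c'\<in>P. \<Sum>t2<n2. ?f c c' t1 t2)" by (rule sum.swap)
      also have "\<dots> = (\<Sum>t1<n1. \<Sum>c\<in>P. \<Sum>t2<n2. \<Sum>c'\<in>P. ?f c c' t1 t2)"
        by (intro sum.cong refl sum.swap)
      also have "\<dots> = (\<Sum>t1<n1. \<Sum>t2<n2. \<Sum>c\<in>P. \<Sum>c'\<in>P. ?f c c' t1 t2)"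
        by (intro sum.cong refl sum.swap)
      finally show "(\<Sum>t1<n1. \<Sum>t2<n2. \<Sum>c\<in>P. \<Sum>c'\<in>P. ?f c c' t1 t2) = (\<Sum>c\<in>P. \<Sum>c'\<in>P. \<Sum>t1<n1. \<Sum>t2<n2. ?f c c' t1 t2)" by simp
    qed
    also have "\<dots> = (\<Sum>c\<in>P. \<Sum>c'\<in>P. X (fX u c) (fX u2 c') * Y (fY u c) (fY u2 c'))"
      using x y hX hY u u2 by (intro sum.cong refl) auto
    finally show "(\<Sum>c\<in>P. \<Sum>c'\<in>P. X (fX u c) (fX u2 c') * Y (fY u c) (fY u2 c')) =
       (\<Sum>t\<in>{..<n1} \<times> {..<n2}. z t u * cnj (z t u2))" by simp
  qed auto
qed

lemma quad_form_identity:
  assumes "finite B"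
  shows "quad_form B (\<lambda>x y. if x = y then 1 else 0) v = complex_of_real (\<Sum>x\<in>B. (cmod (v x))\<^sup>2)"
proof -
  have "quad_form B (\<lambda>x y. if x = y then 1 else 0) v
      = (\<Sum>x\<in>B. \<Sum>y\<in>B. if y = x then cnj (v x) * v y else 0)"
    unfolding quad_form_def by (intro sum.cong refl) auto
  also have "\<dots> = (\<Sum>x\<in>B. cnj (v x) * v x)" using assms by (simp add: sum.delta')
  also have "\<dots> = (\<Sum>x\<in>B. complex_of_real ((cmod (v x))\<^sup>2))"
    by (intro sum.cong refl) (metis complex_norm_square mult.commute)
  finally show ?thesis by simp
qed

lemma cmod_mult_le_sum_squares:
  assumes "finite B" "x \<in> B" "y \<in> B"
  shows "cmod (v x) * cmod (v y) \<le> (\<Sum>z\<in>B. (cmod (v z))\<^sup>2)"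
proof -
  have "(cmod (v x))\<^sup>2 \<le> (\<Sum>z\<in>B. (cmod (v z))\<^sup>2)" "(cmod (v y))\<^sup>2 \<le> (\<Sum>z\<in>B. (cmod (v z))\<^sup>2)"
    using assms by (auto intro!: member_le_sum)
  moreover have "cmod (v x) * cmod (v y) \<le> ((cmod (v x))\<^sup>2 + (cmod (v y))\<^sup>2) / 2"
    using sum_squares_bound[of "cmod (v x)" "cmod (v y)"] by (simp add: power2_eq_square)
  ultimately show ?thesis by simp
qed

lemma cmod_quad_form_le:
  assumes f: "finite B"
  shows "cmod (quad_form B H v) \<le> (\<Sum>x\<in>B. \<Sum>y\<in>B. cmod (H x y)) * (\<Sum>z\<in>B. (cmod (v z))\<^sup>2)"
proof -
  let ?n = "\<Sum>z\<in>B. (cmod (v z))\<^sup>2"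
  have "cmod (quad_form B H v) \<le> (\<Sum>x\<in>B. \<Sum>y\<in>B. cmod (cnj (v x) * H x y * v y))"
    unfolding quad_form_def by (rule order_trans[OF norm_sum sum_mono[OF norm_sum]])
  also have "\<dots> \<le> (\<Sum>x\<in>B. \<Sum>y\<in>B. cmod (H x y) * ?n)"
  proof (intro sum_mono)
    fix x y assume "x \<in> B" "y \<in> B"
    hence "cmod (H x y) * (cmod (v x) * cmod (v y)) \<le> cmod (H x y) * ?n"
      using cmod_mult_le_sum_squares[OF f] by (intro mult_left_mono) auto
    thus "cmod (cnj (v x) * H x y * v y) \<le> cmod (H x y) * ?n" by (simp add: norm_mult mult_ac)
  qed
  finally show ?thesis by (simp add: sum_distrib_right)
qed

text \<open>Take \<open>c\<close> to be the sum of the moduli of the entries.\<close>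

lemma psd_kernel_shift_hermitian:
  assumes f: "finite B" and h: "\<And>x y. x\<in>B \<Longrightarrow> y\<in>B \<Longrightarrow> H y x = cnj (H x y)"
  obtains c where "c \<ge> 0"
    "psd_kernel B (\<lambda>x y. complex_of_real c * (if x = y then 1 else 0) + H x y)"
    "psd_kernel B (\<lambda>x y. complex_of_real c * (if x = y then 1 else 0) - H x y)"
proof -
  define c where "c = (\<Sum>x\<in>B. \<Sum>y\<in>B. cmod (H x y))"
  have c0: "c \<ge> 0" unfolding c_def by (intro sum_nonneg) auto
  have bounds: "0 \<le> complex_of_real c * quad_form B (\<lambda>x y. if x = y then 1 else 0) v + quad_form B H v"
    "0 \<le> complex_of_real c * quad_form B (\<lambda>x y. if x = y then 1 else 0) v - quad_form B H v" for v
  proof -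
    have "Im (cnj (quad_form B H v)) = Im (quad_form B H v)"
      using quad_form_hermitian_real[OF h, where v=v] by simp
    hence "Im (quad_form B H v) = 0" by simp
    moreover have "\<bar>Re (quad_form B H v)\<bar> \<le> c * (\<Sum>z\<in>B. (cmod (v z))\<^sup>2)"
      using order_trans[OF abs_Re_le_cmod cmod_quad_form_le[OF f, where H=H and v=v]] unfolding c_def .
    ultimately show "0 \<le> complex_of_real c * quad_form B (\<lambda>x y. if x = y then 1 else 0) v + quad_form B H v"
      "0 \<le> complex_of_real c * quad_form B (\<lambda>x y. if x = y then 1 else 0) v - quad_form B H v"
      unfolding quad_form_identity[OF f] less_eq_complex_def by auto
  qed
  have plus: "psd_kernel B (\<lambda>x y. complex_of_real c * (if x = y then 1 else 0) + H x y)"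
    unfolding psd_kernel_def using bounds(1) by (simp add: quad_form_add quad_form_scale)
  have minus: "psd_kernel B (\<lambda>x y. complex_of_real c * (if x = y then 1 else 0) - H x y)"
    unfolding psd_kernel_def using bounds(2) by (simp add: quad_form_diff quad_form_scale)
  show ?thesis by (rule that[OF c0 plus minus])
qed

lemma sum_rotate3: "(\<Sum>a\<in>A. \<Sum>x\<in>X. \<Sum>y\<in>Y. f a x y) = (\<Sum>x\<in>X. \<Sum>y\<in>Y. \<Sum>a\<in>A. f a x y)"
  by (subst sum.swap, rule sum.cong[OF refl], rule sum.swap)
lemma sum_rotate4: "(\<Sum>a\<in>A. \<Sum>x\<in>X. \<Sum>y\<in>Y. \<Sum>z\<in>Z. f a x y z) = (\<Sum>x\<in>X. \<Sum>y\<in>Y. \<Sum>z\<in>Z. \<Sum>a\<in>A. f a x y z)"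
  by (subst sum.swap, rule sum.cong[OF refl], rule sum_rotate3)
lemma sum_rotate5: "(\<Sum>a\<in>A. \<Sum>x\<in>X. \<Sum>y\<in>Y. \<Sum>z\<in>Z. \<Sum>w\<in>W. f a x y z w) = (\<Sum>x\<in>X. \<Sum>y\<in>Y. \<Sum>z\<in>Z. \<Sum>w\<in>W. \<Sum>a\<in>A. f a x y z w)"
  by (subst sum.swap, rule sum.cong[OF refl], rule sum_rotate4)
lemma sum_rotate6: "(\<Sum>a\<in>A. \<Sum>x\<in>X. \<Sum>y\<in>Y. \<Sum>z\<in>Z. \<Sum>w\<in>W. \<Sum>v\<in>V. f a x y z w v) = (\<Sum>x\<in>X. \<Sum>y\<in>Y. \<Sum>z\<in>Z. \<Sum>w\<in>W. \<Sum>v\<in>V. \<Sum>a\<in>A. f a x y z w v)"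
  by (subst sum.swap, rule sum.cong[OF refl], rule sum_rotate5)

lemma sum_sum_reindex_bij_betw:
  assumes h: "bij_betw h A B"
  shows "(\<Sum>x\<in>A. \<Sum>y\<in>A. F (h x) (h y)) = (\<Sum>i\<in>B. \<Sum>j\<in>B. F i j)"
proof -
  have "(\<Sum>x\<in>A. \<Sum>y\<in>A. F (h x) (h y)) = (\<Sum>x\<in>A. \<Sum>j\<in>B. F (h x) j)"
    by (intro sum.cong refl sum.reindex_bij_betw[OF h])
  also have "\<dots> = (\<Sum>i\<in>B. \<Sum>j\<in>B. F i j)" by (rule sum.reindex_bij_betw[OF h])
  finally show ?thesis .
qed

lemma quad_form_reindex:
  assumes h: "bij_betw h A B"
  shows "quad_form A (\<lambda>x y. K (h x) (h y)) (v \<circ> h) = quad_form B K v"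
  unfolding quad_form_def using sum_sum_reindex_bij_betw[OF h, of "\<lambda>i j. cnj (v i) * K i j * v j"]
  by simp

lemma psd_kernel_reindex:
  assumes h: "bij_betw h A B"
  shows "psd_kernel B K \<longleftrightarrow> psd_kernel A (\<lambda>x y. K (h x) (h y))"
proof
  assume k: "psd_kernel B K"
  show "psd_kernel A (\<lambda>x y. K (h x) (h y))" unfolding psd_kernel_def
  proof
    fix v :: "_ \<Rightarrow> complex"
    have "quad_form A (\<lambda>x y. K (h x) (h y)) v = quad_form A (\<lambda>x y. K (h x) (h y)) ((v \<circ> inv_into A h) \<circ> h)"
      using h by (intro quad_form_cong_vec) (simp add: bij_betw_def)
    also have "\<dots> = quad_form B K (v \<circ> inv_into A h)" by (rule quad_form_reindex[OF h])
    finally show "0 \<le> quad_form A (\<lambda>x y. K (h x) (h y)) v" using k unfolding psd_kernel_def by simp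
  qed
next
  assume "psd_kernel A (\<lambda>x y. K (h x) (h y))"
  thus "psd_kernel B K" unfolding psd_kernel_def quad_form_reindex[OF h, symmetric] by blast
qed

lemma psd_kernel_comp:
  assumes fI: "finite I" and K: "psd_kernel I K" and fP: "finite P" and f: "\<And>c. c \<in> P \<Longrightarrow> f c \<in> I"
  shows "psd_kernel P (\<lambda>c c'. K (f c) (f c'))"
proof -
  obtain n :: nat and a where a: "\<forall>i\<in>I. \<forall>j\<in>I. K i j = (\<Sum>t<n. a t i * cnj (a t j))"
    using psd_kernel_gram_decomp[OF fI K] by blast
  show ?thesis
    by (rule psd_kernel_gram[OF fP finite_lessThan, where z="\<lambda>t c. a t (f c)"]) (use a f in auto)
qed

section \<open>Matrices as kernels\<close>

definition hermitian_mat :: "complex mat \<Rightarrow> nat \<Rightarrow> bool" where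
  "hermitian_mat M n \<longleftrightarrow> (\<forall>i<n. \<forall>j<n. M $$ (j,i) = cnj (M $$ (i,j)))"

lemma cscalar_prod_eq_quad_form:
  assumes "M \<in> carrier_mat n n" "v \<in> carrier_vec n"
  shows "(M *\<^sub>v v) \<bullet>c v = quad_form {..<n} (\<lambda>i j. M $$ (i,j)) (\<lambda>i. v $ i)"
proof -
  have "(M *\<^sub>v v) \<bullet>c v = (\<Sum>i<n. (\<Sum>j<n. M $$ (i,j) * v $ j) * cnj (v $ i))"
    using assms unfolding scalar_prod_def
    by (intro sum.cong) (auto simp: scalar_prod_def atLeast0LessThan)
  also have "\<dots> = quad_form {..<n} (\<lambda>i j. M $$ (i,j)) (\<lambda>i. v $ i)"
    unfolding quad_form_def sum_distrib_right by (intro sum.cong refl) (simp add: mult_ac)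
  finally show ?thesis .
qed

lemma psd_iff_psd_kernel:
  assumes M: "M \<in> carrier_mat n n"
  shows "psd M \<longleftrightarrow> psd_kernel {..<n} (\<lambda>i j. M $$ (i,j))"
proof
  assume p: "psd M"
  show "psd_kernel {..<n} (\<lambda>i j. M $$ (i,j))" unfolding psd_kernel_def
  proof
    fix w :: "nat \<Rightarrow> complex"
    have v: "vec n w \<in> carrier_vec n" by simp
    have "quad_form {..<n} (\<lambda>i j. M $$ (i,j)) w = quad_form {..<n} (\<lambda>i j. M $$ (i,j)) (\<lambda>i. vec n w $ i)"
      by (intro quad_form_cong_vec) auto
    also have "\<dots> = (M *\<^sub>v vec n w) \<bullet>c vec n w" using cscalar_prod_eq_quad_form[OF M v] by simp
    finally show "0 \<le> quad_form {..<n} (\<lambda>i j. M $$ (i,j)) w" using p M v unfolding psd_def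
      by (auto simp: less_eq_complex_def)
  qed
next
  assume k: "psd_kernel {..<n} (\<lambda>i j. M $$ (i,j))"
  show "psd M" unfolding psd_def
  proof (intro conjI ballI)
    show "M \<in> carrier_mat (dim_row M) (dim_row M)" using M by auto
  next
    fix v :: "complex vec" assume "v \<in> carrier_vec (dim_row M)"
    hence v: "v \<in> carrier_vec n" using M by auto
    have "0 \<le> (M *\<^sub>v v) \<bullet>c v" using k cscalar_prod_eq_quad_form[OF M v] unfolding psd_kernel_def by simp
    thus "Im ((M *\<^sub>v v) \<bullet>c v) = 0" "0 \<le> Re ((M *\<^sub>v v) \<bullet>c v)" by (auto simp: less_eq_complex_def)
  qed
qed

lemma psd_hermitian_mat:
  assumes M: "M \<in> carrier_mat n n" and p: "psd M"
  shows "hermitian_mat M n"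
proof -
  have k: "psd_kernel {..<n} (\<lambda>i j. M $$ (i,j))" using p psd_iff_psd_kernel[OF M] by simp
  show ?thesis unfolding hermitian_mat_def
    using psd_kernel_hermitian[OF k finite_lessThan] by blast
qed

lemma psd_smult_one:
  assumes "0 \<le> c"
  shows "psd (complex_of_real c \<cdot>\<^sub>m 1\<^sub>m n)"
proof -
  have "psd_kernel {..<n} (\<lambda>i j. complex_of_real c * (if i = j then 1 else 0))"
    using psd_kernel_scale[OF _ psd_kernel_identity[of "{..<n}"], of "complex_of_real c"] assms
    by (simp add: less_eq_complex_def)
  moreover have "psd_kernel {..<n} (\<lambda>i j. (complex_of_real c \<cdot>\<^sub>m 1\<^sub>m n) $$ (i,j))
      = psd_kernel {..<n} (\<lambda>i j. complex_of_real c * (if i = j then 1 else 0))"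
    by (rule psd_kernel_cong) simp
  ultimately show ?thesis using psd_iff_psd_kernel[of "complex_of_real c \<cdot>\<^sub>m 1\<^sub>m n" n] by simp
qed

lemma tr_diff:
  "A \<in> carrier_mat n n \<Longrightarrow> B \<in> carrier_mat n n \<Longrightarrow> tr (A - B) = tr A - tr B"
  unfolding tr_def by (simp add: sum_subtractf)

lemma psd_Re_tr_nonneg:
  assumes M: "M \<in> carrier_mat n n" and p: "psd M"
  shows "0 \<le> Re (tr M)"
proof -
  have k: "psd_kernel {..<n} (\<lambda>i j. M $$ (i,j))" using p psd_iff_psd_kernel[OF M] by simp
  have "0 \<le> (\<Sum>i<n. M $$ (i,i))" by (intro sum_nonneg psd_kernel_diag_nonneg[OF k]) auto
  thus ?thesis using M unfolding tr_def by (simp add: less_eq_complex_def)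
qed

section \<open>Mixed-radix indices\<close>

definition idx4 :: "nat \<Rightarrow> nat \<Rightarrow> nat \<Rightarrow> nat \<times> nat \<times> nat \<times> nat \<Rightarrow> nat" where
  "idx4 n2 n3 n4 = (\<lambda>(a,b,c,d). ((a*n2+b)*n3+c)*n4+d)"

definition box4 :: "nat \<Rightarrow> nat \<Rightarrow> nat \<Rightarrow> nat \<Rightarrow> (nat \<times> nat \<times> nat \<times> nat) set" where
  "box4 n1 n2 n3 n4 = {..<n1} \<times> {..<n2} \<times> {..<n3} \<times> {..<n4}"

lemma mixed_radix_less: "(a::nat) < m \<Longrightarrow> b < n \<Longrightarrow> a*n+b < m*n"
proof -
  assume "a < m" "b < n"
  hence "a*n+b < (a+1)*n" by simp
  also have "\<dots> \<le> m*n" using \<open>a < m\<close> by (intro mult_right_mono) auto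
  finally show ?thesis .
qed

lemma mixed_radix3_less: "(a::nat) < n1 \<Longrightarrow> b < n2 \<Longrightarrow> c < n3 \<Longrightarrow> (a*n2+b)*n3+c < n1*n2*n3"
  by (intro mixed_radix_less) auto

lemma mixed_radix_eq_iff:
  assumes "(b::nat) < n" "b' < n"
  shows "a*n+b = a'*n+b' \<longleftrightarrow> a = a' \<and> b = b'"
proof
  assume e: "a*n+b = a'*n+b'"
  have "a = (a*n+b) div n" "b = (a*n+b) mod n" "a' = (a'*n+b') div n" "b' = (a'*n+b') mod n"
    using assms by simp_all
  thus "a = a' \<and> b = b'" unfolding e by simp
qed simp

lemma mixed_radix3_digits:
  assumes "(k::nat) < n2" "m < n3"
  shows "((l*n2+k)*n3+m) div (n2*n3) = l" "((l*n2+k)*n3+m) div n3 mod n2 = k"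
    "((l*n2+k)*n3+m) mod n3 = m"
proof -
  have "((l*n2+k)*n3+m) div n3 = l*n2+k" using assms by simp
  moreover have "((l*n2+k)*n3+m) div (n2*n3) = ((l*n2+k)*n3+m) div n3 div n2"
    by (metis div_mult2_eq mult.commute)
  ultimately show "((l*n2+k)*n3+m) div (n2*n3) = l" "((l*n2+k)*n3+m) div n3 mod n2 = k"
    using assms by simp_all
  show "((l*n2+k)*n3+m) mod n3 = m" using assms by simp
qed

lemma bij_betw_mixed_radix: "bij_betw (\<lambda>(p,q). p*b1+q) ({..<a1}\<times>{..<b1}) {..<a1*(b1::nat)}"
  unfolding bij_betw_def
proof
  show "inj_on (\<lambda>(p,q). p*b1+q) ({..<a1}\<times>{..<b1})"
    unfolding inj_on_def by (auto simp: mixed_radix_eq_iff)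
  show "(\<lambda>(p,q). p*b1+q) ` ({..<a1}\<times>{..<b1}) = {..<a1*b1}"
  proof
    show "(\<lambda>(p,q). p*b1+q) ` ({..<a1}\<times>{..<b1}) \<subseteq> {..<a1*b1}" by (auto intro: mixed_radix_less)
    show "{..<a1*b1} \<subseteq> (\<lambda>(p,q). p*b1+q) ` ({..<a1}\<times>{..<b1})"
    proof
      fix r assume r: "r \<in> {..<a1*b1}"
      hence b0: "b1 > 0" by (cases "b1 = 0") auto
      have "r div b1 < a1" using r by (simp add: less_mult_imp_div_less)
      moreover have "r mod b1 < b1" using b0 by simp
      moreover have "r = (\<lambda>(p,q). p*b1+q) (r div b1, r mod b1)" by simp
      ultimately show "r \<in> (\<lambda>(p,q). p*b1+q) ` ({..<a1}\<times>{..<b1})" by blast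
    qed
  qed
qed

lemma sum_lessThan_mult: "(\<Sum>r<n1*n2. f r) = (\<Sum>a<n1. \<Sum>b<n2. f (a*n2+b :: nat))"
proof (induction n1)
  case 0 thus ?case by simp
next
  case (Suc n1)
  have "(\<Sum>r<Suc n1*n2. f r) = (\<Sum>r<n1*n2. f r) + (\<Sum>r\<in>{n1*n2..<n1*n2+n2}. f r)"
    by (simp add: sum.atLeastLessThan_concat[symmetric] lessThan_atLeast0 add.commute)
  also have "(\<Sum>r\<in>{n1*n2..<n1*n2+n2}. f r) = (\<Sum>b<n2. f (n1*n2+b))"
    by (rule sum.reindex_bij_witness[of _ "\<lambda>b. n1*n2+b" "\<lambda>r. r - n1*n2"]) auto
  finally show ?case using Suc by simp
qed

lemma sum_lessThan_mult3: "(\<Sum>r<n1*n2*n3. f r) = (\<Sum>a<n1. \<Sum>b<n2. \<Sum>c<n3. f ((a*n2+b)*n3+c :: nat))"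
  by (simp add: sum_lessThan_mult)

lemma finite_box4[simp]: "finite (box4 n1 n2 n3 n4)"
  unfolding box4_def by simp

lemma mem_box4: "(a,b,c,d) \<in> box4 n1 n2 n3 n4 \<longleftrightarrow> a < n1 \<and> b < n2 \<and> c < n3 \<and> d < n4"
  unfolding box4_def by auto

lemma sum_box4: "(\<Sum>x\<in>box4 n1 n2 n3 n4. f x) = (\<Sum>a<n1. \<Sum>b<n2. \<Sum>c<n3. \<Sum>d<n4. f (a,b,c,d))"
  unfolding box4_def by (simp add: sum.cartesian_product)

lemma idx4_less: "x \<in> box4 n1 n2 n3 n4 \<Longrightarrow> idx4 n2 n3 n4 x < n1*n2*n3*n4"
  unfolding box4_def idx4_def by (auto intro!: mixed_radix_less)

lemma idx4_eq_mid: "idx4 n2 n3 n4 (a,b,c,d) = (a*(n2*n3) + (b*n3+c))*n4+d"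
  unfolding idx4_def by (simp add: algebra_simps)

lemma idx4_eq_split: "idx4 n2 n3 n4 (a,b,c,d) = (a*n2+b)*(n3*n4) + (c*n4+d)"
  unfolding idx4_def by (simp add: algebra_simps)

lemma mult_assoc4: "(n1*n2)*(n3*n4) = n1*n2*n3*(n4::nat)"
  by (simp add: mult.assoc)

lemma bij_betw_idx4: "bij_betw (idx4 n2 n3 n4) (box4 n1 n2 n3 n4) {..<n1*n2*n3*n4}"
  unfolding bij_betw_def
proof
  show "inj_on (idx4 n2 n3 n4) (box4 n1 n2 n3 n4)"
    unfolding inj_on_def box4_def idx4_def by (auto simp: mixed_radix_eq_iff)
  show "idx4 n2 n3 n4 ` box4 n1 n2 n3 n4 = {..<n1*n2*n3*n4}"
  proof
    show "idx4 n2 n3 n4 ` box4 n1 n2 n3 n4 \<subseteq> {..<n1*n2*n3*n4}" using idx4_less by auto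
    show "{..<n1*n2*n3*n4} \<subseteq> idx4 n2 n3 n4 ` box4 n1 n2 n3 n4"
    proof
      fix r assume "r \<in> {..<n1*n2*n3*n4}"
      hence r: "r < ((n1*n2)*n3)*n4" by simp
      define r1 where "r1 = r div n4"
      define r2 where "r2 = r1 div n3"
      define r3 where "r3 = r2 div n2"
      have n4: "n4 > 0" using r by (cases "n4 = 0") auto
      have n3: "n3 > 0" using r by (cases "n3 = 0") auto
      have n2: "n2 > 0" using r by (cases "n2 = 0") auto
      have r1: "r1 < (n1*n2)*n3" using r n4 unfolding r1_def by (simp add: less_mult_imp_div_less)
      have r2: "r2 < n1*n2" using r1 n3 unfolding r2_def by (simp add: less_mult_imp_div_less)
      have r3: "r3 < n1" using r2 n2 unfolding r3_def by (simp add: less_mult_imp_div_less)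
      have "r = idx4 n2 n3 n4 (r3, r2 mod n2, r1 mod n3, r mod n4)"
        unfolding idx4_def r1_def r2_def r3_def by simp
      moreover have "(r3, r2 mod n2, r1 mod n3, r mod n4) \<in> box4 n1 n2 n3 n4"
        unfolding box4_def using r3 n2 n3 n4 by auto
      ultimately show "r \<in> idx4 n2 n3 n4 ` box4 n1 n2 n3 n4" by blast
    qed
  qed
qed

lemma sum_lessThan_idx4: "(\<Sum>r<n1*n2*n3*n4. f r) = (\<Sum>x\<in>box4 n1 n2 n3 n4. f (idx4 n2 n3 n4 x))"
  using sum.reindex_bij_betw[OF bij_betw_idx4, of f n2 n3 n4 n1] by simp

lemma idx4_digits:
  assumes "b < n2" "c < n3" "d < (n4::nat)"
  shows "idx4 n2 n3 n4 (a,b,c,d) div (n2*n3*n4) = a"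
    "idx4 n2 n3 n4 (a,b,c,d) div (n3*n4) mod n2 = b"
    "idx4 n2 n3 n4 (a,b,c,d) div n4 mod n3 = c"
    "idx4 n2 n3 n4 (a,b,c,d) mod n4 = d"
proof -
  let ?r = "idx4 n2 n3 n4 (a,b,c,d)"
  have 1: "?r div n4 = (a*n2+b)*n3+c" "?r mod n4 = d" using assms unfolding idx4_def by simp_all
  have 2: "?r div n4 div n3 = a*n2+b" "?r div n4 mod n3 = c" unfolding 1 using assms by simp_all
  have "?r div (n2*n3*n4) = ?r div n4 div n3 div n2"
    by (metis div_mult2_eq mult.commute mult.assoc)
  thus "?r div (n2*n3*n4) = a" using 2 assms by simp
  have "?r div (n3*n4) = ?r div n4 div n3" by (metis div_mult2_eq mult.commute)
  thus "?r div (n3*n4) mod n2 = b" using 2 assms by simp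
  show "?r div n4 mod n3 = c" "?r mod n4 = d" using 1 2 by simp_all
qed

section \<open>Kernels of operators on four systems\<close>

definition kernel4 ::
  "complex mat \<Rightarrow> nat \<Rightarrow> nat \<Rightarrow> nat \<Rightarrow> nat\<times>nat\<times>nat\<times>nat \<Rightarrow> nat\<times>nat\<times>nat\<times>nat \<Rightarrow> complex" where
  "kernel4 M n2 n3 n4 = (\<lambda>x y. M $$ (idx4 n2 n3 n4 x, idx4 n2 n3 n4 y))"

definition mat4 :: "nat \<Rightarrow> nat \<Rightarrow> nat \<Rightarrow> nat \<Rightarrow>
    (nat\<times>nat\<times>nat\<times>nat \<Rightarrow> nat\<times>nat\<times>nat\<times>nat \<Rightarrow> complex) \<Rightarrow> complex mat" where
  "mat4 n1 n2 n3 n4 K = mat (n1*n2*n3*n4) (n1*n2*n3*n4)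
     (\<lambda>(r,c). K (inv_into (box4 n1 n2 n3 n4) (idx4 n2 n3 n4) r) (inv_into (box4 n1 n2 n3 n4) (idx4 n2 n3 n4) c))"

text \<open>The partial transpose on the last two systems, in kernel form.\<close>

definition ptrans_kernel :: "(nat\<times>nat\<times>nat\<times>nat \<Rightarrow> nat\<times>nat\<times>nat\<times>nat \<Rightarrow> complex) \<Rightarrow>
    nat\<times>nat\<times>nat\<times>nat \<Rightarrow> nat\<times>nat\<times>nat\<times>nat \<Rightarrow> complex" where
  "ptrans_kernel K = (\<lambda>(a,b,c,d) (a',b',c',d'). K (a,b,c',d') (a',b',c,d))"

lemma ptrans2_carrier[simp]: "ptrans2 dc dd M \<in> carrier_mat (dc*dd) (dc*dd)"
  unfolding ptrans2_def by simp

lemma ptrans2_dims[simp]: "dim_row (ptrans2 dc dd M) = dc*dd" "dim_col (ptrans2 dc dd M) = dc*dd"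
  unfolding ptrans2_def by simp_all

lemma mat4_carrier[simp]: "mat4 n1 n2 n3 n4 K \<in> carrier_mat (n1*n2*n3*n4) (n1*n2*n3*n4)"
  unfolding mat4_def by simp

lemma kernel4_mat4:
  assumes x: "x \<in> box4 n1 n2 n3 n4" and y: "y \<in> box4 n1 n2 n3 n4"
  shows "kernel4 (mat4 n1 n2 n3 n4 K) n2 n3 n4 x y = K x y"
proof -
  have inj: "inj_on (idx4 n2 n3 n4) (box4 n1 n2 n3 n4)" using bij_betw_idx4 unfolding bij_betw_def by blast
  show ?thesis unfolding kernel4_def mat4_def
    using idx4_less[OF x] idx4_less[OF y] inv_into_f_f[OF inj x] inv_into_f_f[OF inj y] by simp
qed

lemma psd_iff_psd_kernel4:
  assumes "M \<in> carrier_mat (n1*n2*n3*n4) (n1*n2*n3*n4)"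
  shows "psd M \<longleftrightarrow> psd_kernel (box4 n1 n2 n3 n4) (kernel4 M n2 n3 n4)"
  using psd_iff_psd_kernel[OF assms] psd_kernel_reindex[OF bij_betw_idx4] unfolding kernel4_def by simp

lemma tr_eq_sum_kernel4:
  assumes "M \<in> carrier_mat (n1*n2*n3*n4) (n1*n2*n3*n4)"
  shows "tr M = (\<Sum>x\<in>box4 n1 n2 n3 n4. kernel4 M n2 n3 n4 x x)"
  using assms unfolding tr_def kernel4_def by (simp add: sum_lessThan_idx4)

lemma hermitian_mat_if_kernel4:
  assumes h: "\<And>x y. x \<in> box4 n1 n2 n3 n4 \<Longrightarrow> y \<in> box4 n1 n2 n3 n4 \<Longrightarrow>
      kernel4 M n2 n3 n4 y x = cnj (kernel4 M n2 n3 n4 x y)"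
  shows "hermitian_mat M (n1*n2*n3*n4)"
  unfolding hermitian_mat_def
proof (intro allI impI)
  fix i j assume "i < n1*n2*n3*n4" "j < n1*n2*n3*n4"
  moreover have img: "idx4 n2 n3 n4 ` box4 n1 n2 n3 n4 = {..<n1*n2*n3*n4}"
    using bij_betw_idx4 unfolding bij_betw_def by blast
  ultimately have "i \<in> idx4 n2 n3 n4 ` box4 n1 n2 n3 n4" "j \<in> idx4 n2 n3 n4 ` box4 n1 n2 n3 n4"
    by simp_all
  then obtain x y where x: "x \<in> box4 n1 n2 n3 n4" "i = idx4 n2 n3 n4 x"
    and y: "y \<in> box4 n1 n2 n3 n4" "j = idx4 n2 n3 n4 y" by blast
  have "kernel4 M n2 n3 n4 y x = cnj (kernel4 M n2 n3 n4 x y)" by (rule h[OF x(1) y(1)])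
  thus "M $$ (j,i) = cnj (M $$ (i,j))" unfolding kernel4_def x(2) y(2) .
qed

lemma ptrans2_idx4:
  assumes "(a,b,c,d) \<in> box4 n1 n2 n3 n4" "(a',b',c',d') \<in> box4 n1 n2 n3 n4"
  shows "ptrans2 (n1*n2) (n3*n4) M $$ (idx4 n2 n3 n4 (a,b,c,d), idx4 n2 n3 n4 (a',b',c',d')) =
         M $$ (idx4 n2 n3 n4 (a,b,c',d'), idx4 n2 n3 n4 (a',b',c,d))"
proof -
  from assms have r: "a < n1" "b < n2" "c < n3" "d < n4" "a' < n1" "b' < n2" "c' < n3" "d' < n4"
    by (auto simp: mem_box4)
  have "(a*n2+b)*(n3*n4) + (c*n4+d) < (n1*n2)*(n3*n4)"
    "(a'*n2+b')*(n3*n4) + (c'*n4+d') < (n1*n2)*(n3*n4)"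
    using r by (auto intro!: mixed_radix_less)
  moreover have m: "c*n4+d < n3*n4" "c'*n4+d' < n3*n4" using r by (auto intro: mixed_radix_less)
  moreover have dm: "\<And>q s n. (s::nat) < n \<Longrightarrow> (q*n + s) div n = q" by simp
  ultimately show ?thesis unfolding idx4_eq_split ptrans2_def by (simp add: dm[OF m(1)] dm[OF m(2)])
qed

lemma kernel4_ptrans2:
  assumes "x \<in> box4 n1 n2 n3 n4" "y \<in> box4 n1 n2 n3 n4"
  shows "kernel4 (ptrans2 (n1*n2) (n3*n4) M) n2 n3 n4 x y = ptrans_kernel (kernel4 M n2 n3 n4) x y"
  using assms ptrans2_idx4 unfolding kernel4_def ptrans_kernel_def by (cases x, cases y) auto

lemma ptrans_kernel_cong:
  assumes K: "\<And>x y. x \<in> box4 n1 n2 n3 n4 \<Longrightarrow> y \<in> box4 n1 n2 n3 n4 \<Longrightarrow> K x y = K' x y"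
    and x: "x \<in> box4 n1 n2 n3 n4" and y: "y \<in> box4 n1 n2 n3 n4"
  shows "ptrans_kernel K x y = ptrans_kernel K' x y"
proof -
  obtain a b c d where xx: "x = (a,b,c,d)" by (cases x) auto
  obtain a' b' c' d' where yy: "y = (a',b',c',d')" by (cases y) auto
  have "(a,b,c',d') \<in> box4 n1 n2 n3 n4" "(a',b',c,d) \<in> box4 n1 n2 n3 n4"
    using x y xx yy by (auto simp: mem_box4)
  thus ?thesis unfolding xx yy ptrans_kernel_def using K by simp
qed

lemma loewner_le_neg_ptrans2_iff:
  assumes A: "A \<in> carrier_mat (n1*n2*n3*n4) (n1*n2*n3*n4)"
  shows "loewner_le (- ptrans2 (n1*n2) (n3*n4) B) (ptrans2 (n1*n2) (n3*n4) A) \<longleftrightarrow>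
    psd_kernel (box4 n1 n2 n3 n4)
      (\<lambda>x y. ptrans_kernel (kernel4 A n2 n3 n4) x y + ptrans_kernel (kernel4 B n2 n3 n4) x y)"
proof -
  let ?M = "ptrans2 (n1*n2) (n3*n4) A - (- ptrans2 (n1*n2) (n3*n4) B)"
  have c: "?M \<in> carrier_mat (n1*n2*n3*n4) (n1*n2*n3*n4)"
    using ptrans2_carrier[of "n1*n2" "n3*n4"] unfolding mult_assoc4 by (intro minus_carrier_mat) simp
  have "loewner_le (- ptrans2 (n1*n2) (n3*n4) B) (ptrans2 (n1*n2) (n3*n4) A) \<longleftrightarrow> psd ?M"
    unfolding loewner_le_def by simp
  also have "\<dots> \<longleftrightarrow> psd_kernel (box4 n1 n2 n3 n4) (kernel4 ?M n2 n3 n4)"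
    by (rule psd_iff_psd_kernel4[OF c])
  also have "\<dots> \<longleftrightarrow> psd_kernel (box4 n1 n2 n3 n4)
      (\<lambda>x y. ptrans_kernel (kernel4 A n2 n3 n4) x y + ptrans_kernel (kernel4 B n2 n3 n4) x y)"
  proof (rule psd_kernel_cong)
    fix x y assume x: "x \<in> box4 n1 n2 n3 n4" and y: "y \<in> box4 n1 n2 n3 n4"
    have "idx4 n2 n3 n4 x < (n1*n2)*(n3*n4)" "idx4 n2 n3 n4 y < (n1*n2)*(n3*n4)"
      using idx4_less[OF x] idx4_less[OF y] by (simp_all add: mult_assoc4)
    thus "kernel4 ?M n2 n3 n4 x y
        = ptrans_kernel (kernel4 A n2 n3 n4) x y + ptrans_kernel (kernel4 B n2 n3 n4) x y"
      using kernel4_ptrans2[OF x y, of A] kernel4_ptrans2[OF x y, of B]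
      unfolding kernel4_def by simp
  qed
  finally show ?thesis .
qed

lemma loewner_le_ptrans2_iff:
  assumes A: "A \<in> carrier_mat (n1*n2*n3*n4) (n1*n2*n3*n4)"
  shows "loewner_le (ptrans2 (n1*n2) (n3*n4) A) (ptrans2 (n1*n2) (n3*n4) B) \<longleftrightarrow>
    psd_kernel (box4 n1 n2 n3 n4)
      (\<lambda>x y. ptrans_kernel (kernel4 B n2 n3 n4) x y - ptrans_kernel (kernel4 A n2 n3 n4) x y)"
proof -
  let ?M = "ptrans2 (n1*n2) (n3*n4) B - ptrans2 (n1*n2) (n3*n4) A"
  have c: "?M \<in> carrier_mat (n1*n2*n3*n4) (n1*n2*n3*n4)"
    using ptrans2_carrier[of "n1*n2" "n3*n4"] unfolding mult_assoc4 by (intro minus_carrier_mat) simp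
  have "loewner_le (ptrans2 (n1*n2) (n3*n4) A) (ptrans2 (n1*n2) (n3*n4) B) \<longleftrightarrow> psd ?M"
    unfolding loewner_le_def by simp
  also have "\<dots> \<longleftrightarrow> psd_kernel (box4 n1 n2 n3 n4) (kernel4 ?M n2 n3 n4)"
    by (rule psd_iff_psd_kernel4[OF c])
  also have "\<dots> \<longleftrightarrow> psd_kernel (box4 n1 n2 n3 n4)
      (\<lambda>x y. ptrans_kernel (kernel4 B n2 n3 n4) x y - ptrans_kernel (kernel4 A n2 n3 n4) x y)"
  proof (rule psd_kernel_cong)
    fix x y assume x: "x \<in> box4 n1 n2 n3 n4" and y: "y \<in> box4 n1 n2 n3 n4"
    have "idx4 n2 n3 n4 x < (n1*n2)*(n3*n4)" "idx4 n2 n3 n4 y < (n1*n2)*(n3*n4)"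
      using idx4_less[OF x] idx4_less[OF y] by (simp_all add: mult_assoc4)
    thus "kernel4 ?M n2 n3 n4 x y
        = ptrans_kernel (kernel4 B n2 n3 n4) x y - ptrans_kernel (kernel4 A n2 n3 n4) x y"
      using kernel4_ptrans2[OF x y, of A] kernel4_ptrans2[OF x y, of B]
      unfolding kernel4_def by simp
  qed
  finally show ?thesis .
qed

section \<open>Feasible operators for \<open>W\<^sub>\<kappa>\<close>\<close>

definition kappa_feasible :: "nat \<Rightarrow> nat \<Rightarrow> complex mat \<Rightarrow> complex mat \<Rightarrow> bool" where
  "kappa_feasible dc dd \<rho> S \<longleftrightarrow> S \<in> carrier_mat (dc*dd) (dc*dd) \<and> psd S \<and>
     loewner_le (- ptrans2 dc dd S) (ptrans2 dc dd \<rho>) \<and> loewner_le (ptrans2 dc dd \<rho>) (ptrans2 dc dd S)"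

lemma W_kappa_eq_Inf_feasible:
  "W_kappa dc dd \<rho> = Inf {Re (tr S) | S. kappa_feasible dc dd \<rho> S}"
  unfolding W_kappa_def kappa_feasible_def ..

lemma E_kappa_channel_eq_log_Inf_feasible:
  "E_kappa_channel dA' dB' dA dB N = log 2 (Inf {opnorm (ptrace_mid dA' (dA*dB) dB' Q) | Q.
     kappa_feasible (dA'*dA) (dB*dB') (choi dA' dB' dA dB N) Q})"
  unfolding E_kappa_channel_def kappa_feasible_def by (simp add: mult_assoc4)

lemma ptrans2_entry:
  "i < dc*dd \<Longrightarrow> j < dc*dd \<Longrightarrow>
     ptrans2 dc dd M $$ (i,j) = M $$ ((i div dd)*dd + j mod dd, (j div dd)*dd + i mod dd)"
  unfolding ptrans2_def by simp

lemma ptrans2_index_less: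
  assumes "i < dc*dd" "j < dc*(dd::nat)"
  shows "(i div dd)*dd + j mod dd < dc*dd"
proof -
  have "0 < dd" using assms by (cases "dd = 0") auto
  thus ?thesis using assms by (intro mixed_radix_less) (simp_all add: less_mult_imp_div_less)
qed

lemma tr_ptrans2:
  assumes "M \<in> carrier_mat (dc*dd) (dc*dd)"
  shows "tr (ptrans2 dc dd M) = tr M"
  using assms unfolding tr_def by (simp add: ptrans2_entry)

lemma hermitian_ptrans2:
  assumes h: "hermitian_mat M (dc*dd)"
  shows "hermitian_mat (ptrans2 dc dd M) (dc*dd)"
  unfolding hermitian_mat_def
proof (intro allI impI)
  fix i j assume ij: "i < dc*dd" "j < dc*dd"
  have "(i div dd)*dd + j mod dd < dc*dd" "(j div dd)*dd + i mod dd < dc*dd"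
    using ptrans2_index_less ij by blast+
  with h have "M $$ ((j div dd)*dd + i mod dd, (i div dd)*dd + j mod dd)
      = cnj (M $$ ((i div dd)*dd + j mod dd, (j div dd)*dd + i mod dd))"
    unfolding hermitian_mat_def by blast
  thus "ptrans2 dc dd M $$ (j,i) = cnj (ptrans2 dc dd M $$ (i,j))"
    using ij by (simp add: ptrans2_entry)
qed

lemma ptrans2_smult_one:
  "ptrans2 dc dd (c \<cdot>\<^sub>m 1\<^sub>m (dc*dd)) = c \<cdot>\<^sub>m 1\<^sub>m (dc*dd)"
proof (rule eq_matI)
  fix i j assume "i < dim_row (c \<cdot>\<^sub>m 1\<^sub>m (dc*dd))" "j < dim_col (c \<cdot>\<^sub>m 1\<^sub>m (dc*dd))"
  hence ij: "i < dc*dd" "j < dc*dd" by simp_all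
  have dd: "0 < dd" using ij by (cases "dd = 0") auto
  have "(i div dd)*dd + j mod dd = (j div dd)*dd + i mod dd \<longleftrightarrow> i = j"
    using dd mixed_radix_eq_iff[of "j mod dd" dd "i mod dd" "i div dd" "j div dd"]
    by (metis div_mult_mod_eq mod_less_divisor)
  thus "ptrans2 dc dd (c \<cdot>\<^sub>m 1\<^sub>m (dc*dd)) $$ (i,j) = (c \<cdot>\<^sub>m 1\<^sub>m (dc*dd)) $$ (i,j)"
    using ij ptrans2_index_less[OF ij] ptrans2_index_less[OF ij(2,1)] by (simp add: ptrans2_entry)
qed simp_all

text \<open>Partial transposition preserves the trace.\<close>

lemma kappa_feasible_tr_ge:
  assumes S: "kappa_feasible dc dd \<rho> S" and \<rho>: "\<rho> \<in> carrier_mat (dc*dd) (dc*dd)"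
  shows "Re (tr \<rho>) \<le> Re (tr S)"
proof -
  have Sc: "S \<in> carrier_mat (dc*dd) (dc*dd)" and le: "psd (ptrans2 dc dd S - ptrans2 dc dd \<rho>)"
    using S unfolding kappa_feasible_def loewner_le_def by auto
  have "0 \<le> Re (tr (ptrans2 dc dd S - ptrans2 dc dd \<rho>))"
    by (rule psd_Re_tr_nonneg[OF minus_carrier_mat[OF ptrans2_carrier] le])
  thus ?thesis by (simp add: tr_diff[of _ "dc*dd"] tr_ptrans2[OF Sc] tr_ptrans2[OF \<rho>])
qed

text \<open>A large multiple of the identity is feasible for every hermitian operator.\<close>

lemma kappa_feasible_exists:
  assumes A: "A \<in> carrier_mat (dc*dd) (dc*dd)" and h: "hermitian_mat A (dc*dd)"
  shows "\<exists>S. kappa_feasible dc dd A S"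
proof -
  let ?n = "dc*dd"
  let ?H = "\<lambda>i j. ptrans2 dc dd A $$ (i,j)"
  let ?\<delta> = "\<lambda>i j. if i = j then 1 else (0::complex)"
  have hH: "?H j i = cnj (?H i j)" if "i \<in> {..<?n}" "j \<in> {..<?n}" for i j
    using hermitian_ptrans2[OF h] that unfolding hermitian_mat_def lessThan_iff by blast
  obtain c where c: "c \<ge> 0"
    and plus: "psd_kernel {..<?n} (\<lambda>i j. complex_of_real c * ?\<delta> i j + ?H i j)"
    and minus: "psd_kernel {..<?n} (\<lambda>i j. complex_of_real c * ?\<delta> i j - ?H i j)"
    by (rule psd_kernel_shift_hermitian[of "{..<?n}" ?H, OF finite_lessThan hH])
  define S where "S = complex_of_real c \<cdot>\<^sub>m 1\<^sub>m ?n"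
  have Sc: "S \<in> carrier_mat ?n ?n" unfolding S_def by simp
  have pS: "ptrans2 dc dd S = S" unfolding S_def by (rule ptrans2_smult_one)
  have "psd_kernel {..<?n} (\<lambda>i j. (ptrans2 dc dd A - - S) $$ (i,j))
      = psd_kernel {..<?n} (\<lambda>i j. complex_of_real c * ?\<delta> i j + ?H i j)"
    by (rule psd_kernel_cong) (simp add: S_def algebra_simps)
  hence P1: "psd (ptrans2 dc dd A - - S)"
    using plus psd_iff_psd_kernel[OF minus_carrier_mat[OF uminus_carrier_mat[OF Sc]]] by simp
  have "psd_kernel {..<?n} (\<lambda>i j. (S - ptrans2 dc dd A) $$ (i,j))
      = psd_kernel {..<?n} (\<lambda>i j. complex_of_real c * ?\<delta> i j - ?H i j)"
    using Sc by (intro psd_kernel_cong) (simp add: S_def)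
  hence P2: "psd (S - ptrans2 dc dd A)"
    using minus psd_iff_psd_kernel[OF minus_carrier_mat[OF ptrans2_carrier]] by simp
  have "psd S" unfolding S_def by (rule psd_smult_one[OF c])
  hence "kappa_feasible dc dd A S"
    unfolding kappa_feasible_def loewner_le_def pS using Sc P1 P2 by simp
  thus ?thesis by blast
qed

section \<open>Link product of kernels\<close>

text \<open>\<open>link a1 b1 X Y\<close> contracts the two middle systems of a kernel \<open>X\<close> on \<open>L\<^sub>A\<otimes>A'\<otimes>B'\<otimes>L\<^sub>B\<close>
  with the two outer systems of a kernel \<open>Y\<close> on \<open>A'\<otimes>A\<otimes>B\<otimes>B'\<close> (dimensions \<open>a1\<close>, \<open>b1\<close> of
  \<open>A'\<close>, \<open>B'\<close>), giving a kernel on \<open>L\<^sub>A\<otimes>A\<otimes>B\<otimes>L\<^sub>B\<close>; see \<open>link_expand\<close>.\<close>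

definition link_state_idx :: "nat\<times>nat\<times>nat\<times>nat \<Rightarrow> nat\<times>nat \<Rightarrow> nat\<times>nat\<times>nat\<times>nat" where
  "link_state_idx u c = (fst u, fst c, snd c, snd (snd (snd u)))"

definition link_choi_idx :: "nat\<times>nat\<times>nat\<times>nat \<Rightarrow> nat\<times>nat \<Rightarrow> nat\<times>nat\<times>nat\<times>nat" where
  "link_choi_idx u c = (fst c, fst (snd u), fst (snd (snd u)), snd c)"

definition link :: "nat \<Rightarrow> nat \<Rightarrow> (nat\<times>nat\<times>nat\<times>nat \<Rightarrow> nat\<times>nat\<times>nat\<times>nat \<Rightarrow> complex) \<Rightarrow>
    (nat\<times>nat\<times>nat\<times>nat \<Rightarrow> nat\<times>nat\<times>nat\<times>nat \<Rightarrow> complex) \<Rightarrow>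
    nat\<times>nat\<times>nat\<times>nat \<Rightarrow> nat\<times>nat\<times>nat\<times>nat \<Rightarrow> complex" where
  "link a1 b1 X Y u u2 = (\<Sum>c\<in>{..<a1}\<times>{..<b1}. \<Sum>c'\<in>{..<a1}\<times>{..<b1}.
      X (link_state_idx u c) (link_state_idx u2 c') * Y (link_choi_idx u c) (link_choi_idx u2 c'))"

lemma link_expand: "link a1 b1 X Y (l,a,b,m) (l',a',b',m') =
  (\<Sum>p<a1. \<Sum>q<b1. \<Sum>p'<a1. \<Sum>q'<b1. X (l,p,q,m) (l',p',q',m') * Y (p,a,b,q) (p',a',b',q'))"
  unfolding link_def sum.cartesian_product' by (simp add: link_state_idx_def link_choi_idx_def)

lemma psd_kernel_link:
  assumes X: "psd_kernel (box4 lA a1 b1 lB) X" and Y: "psd_kernel (box4 a1 a2 b2 b1) Y"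
  shows "psd_kernel (box4 lA a2 b2 lB) (link a1 b1 X Y)"
  unfolding link_def[abs_def]
  by (rule psd_kernel_contract_product[OF _ _ _ _ X Y])
     (auto simp: box4_def link_state_idx_def link_choi_idx_def)

lemma link_cong:
  assumes X: "\<And>x y. x \<in> box4 lA a1 b1 lB \<Longrightarrow> y \<in> box4 lA a1 b1 lB \<Longrightarrow> X x y = X' x y"
    and Y: "\<And>x y. x \<in> box4 a1 a2 b2 b1 \<Longrightarrow> y \<in> box4 a1 a2 b2 b1 \<Longrightarrow> Y x y = Y' x y"
    and u: "u \<in> box4 lA a2 b2 lB" and v: "v \<in> box4 lA a2 b2 lB"
  shows "link a1 b1 X Y u v = link a1 b1 X' Y' u v"
  unfolding link_def
proof (intro sum.cong refl)
  fix c c' assume c: "c \<in> {..<a1}\<times>{..<b1}" and c': "c' \<in> {..<a1}\<times>{..<b1}"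
  have "link_state_idx u c \<in> box4 lA a1 b1 lB" "link_state_idx v c' \<in> box4 lA a1 b1 lB"
       "link_choi_idx u c \<in> box4 a1 a2 b2 b1" "link_choi_idx v c' \<in> box4 a1 a2 b2 b1"
    using u v c c' by (auto simp: box4_def link_state_idx_def link_choi_idx_def)
  thus "X (link_state_idx u c) (link_state_idx v c') * Y (link_choi_idx u c) (link_choi_idx v c')
      = X' (link_state_idx u c) (link_state_idx v c') * Y' (link_choi_idx u c) (link_choi_idx v c')"
    using X Y by simp
qed

lemma ptrans_kernel_link: "ptrans_kernel (link a1 b1 X Y) u u2 = link a1 b1 (ptrans_kernel X) (ptrans_kernel Y) u u2"
proof -
  obtain l a b m where u: "u = (l,a,b,m)" by (cases u) auto
  obtain l' a' b' m' where u2: "u2 = (l',a',b',m')" by (cases u2) auto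
  let ?G = "\<lambda>p q p' q'. X (l,p,q,m') (l',p',q',m) * Y (p,a,b',q) (p',a',b,q')"
  have "ptrans_kernel (link a1 b1 X Y) u u2 = (\<Sum>p<a1. \<Sum>q<b1. \<Sum>p'<a1. \<Sum>q'<b1. ?G p q p' q')"
    unfolding u u2 ptrans_kernel_def by (simp add: link_expand)
  also have "\<dots> = (\<Sum>p<a1. \<Sum>q<b1. \<Sum>p'<a1. \<Sum>q'<b1. ?G p q' p' q)"
  proof (rule sum.cong[OF refl])
    fix p
    have "(\<Sum>q<b1. \<Sum>p'<a1. \<Sum>q'<b1. ?G p q p' q') = (\<Sum>p'<a1. \<Sum>q<b1. \<Sum>q'<b1. ?G p q p' q')"
      by (rule sum.swap)
    also have "\<dots> = (\<Sum>p'<a1. \<Sum>q'<b1. \<Sum>q<b1. ?G p q p' q')"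
      by (intro sum.cong refl sum.swap)
    also have "\<dots> = (\<Sum>q'<b1. \<Sum>p'<a1. \<Sum>q<b1. ?G p q p' q')"
      by (rule sum.swap)
    finally show "(\<Sum>q<b1. \<Sum>p'<a1. \<Sum>q'<b1. ?G p q p' q') = (\<Sum>q<b1. \<Sum>p'<a1. \<Sum>q'<b1. ?G p q' p' q)" .
  qed
  also have "\<dots> = link a1 b1 (ptrans_kernel X) (ptrans_kernel Y) u u2"
    unfolding u u2 ptrans_kernel_def by (simp add: link_expand)
  finally show ?thesis .
qed

lemma link_add_add_diff_diff:
  "link a1 b1 (\<lambda>x y. X x y + X' x y) (\<lambda>x y. Y x y + Y' x y) u v +
   link a1 b1 (\<lambda>x y. X' x y - X x y) (\<lambda>x y. Y' x y - Y x y) u v =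
   2 * (link a1 b1 X Y u v + link a1 b1 X' Y' u v)"
  unfolding link_def sum.distrib[symmetric] sum_distrib_left
  by (intro sum.cong refl) (simp add: algebra_simps)

lemma link_add_diff_diff_add:
  "link a1 b1 (\<lambda>x y. X x y + X' x y) (\<lambda>x y. Y' x y - Y x y) u v +
   link a1 b1 (\<lambda>x y. X' x y - X x y) (\<lambda>x y. Y x y + Y' x y) u v =
   2 * (link a1 b1 X' Y' u v - link a1 b1 X Y u v)"
  unfolding link_def sum.distrib[symmetric] sum_distrib_left sum_subtractf[symmetric]
  by (intro sum.cong refl) (simp add: algebra_simps)

text \<open>The link product is monotone for the order \<open>-X' \<le> X \<le> X'\<close>, since
  \<open>X' \<plusminus> X \<ge> 0\<close> and \<open>Y' \<plusminus> Y \<ge> 0\<close> make all four products \<open>(X' \<plusminus> X) * (Y' \<plusminus> Y)\<close> positive.\<close>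

lemma psd_kernel_link_sandwich:
  assumes Xp: "psd_kernel (box4 lA a1 b1 lB) (\<lambda>x y. X x y + X' x y)"
    and Xm: "psd_kernel (box4 lA a1 b1 lB) (\<lambda>x y. X' x y - X x y)"
    and Yp: "psd_kernel (box4 a1 a2 b2 b1) (\<lambda>x y. Y x y + Y' x y)"
    and Ym: "psd_kernel (box4 a1 a2 b2 b1) (\<lambda>x y. Y' x y - Y x y)"
  shows "psd_kernel (box4 lA a2 b2 lB) (\<lambda>u v. link a1 b1 X Y u v + link a1 b1 X' Y' u v)"
    and "psd_kernel (box4 lA a2 b2 lB) (\<lambda>u v. link a1 b1 X' Y' u v - link a1 b1 X Y u v)"
proof -
  have half: "(0::complex) \<le> 1/2" by (simp add: less_eq_complex_def)
  have "psd_kernel (box4 lA a2 b2 lB) (\<lambda>u v. 1/2 *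
      (link a1 b1 (\<lambda>x y. X x y + X' x y) (\<lambda>x y. Y x y + Y' x y) u v +
       link a1 b1 (\<lambda>x y. X' x y - X x y) (\<lambda>x y. Y' x y - Y x y) u v))"
    by (intro psd_kernel_scale[OF half] psd_kernel_add psd_kernel_link Xp Xm Yp Ym)
  thus "psd_kernel (box4 lA a2 b2 lB) (\<lambda>u v. link a1 b1 X Y u v + link a1 b1 X' Y' u v)"
    unfolding link_add_add_diff_diff by (simp add: add_divide_distrib)
  have "psd_kernel (box4 lA a2 b2 lB) (\<lambda>u v. 1/2 *
      (link a1 b1 (\<lambda>x y. X x y + X' x y) (\<lambda>x y. Y' x y - Y x y) u v +
       link a1 b1 (\<lambda>x y. X' x y - X x y) (\<lambda>x y. Y x y + Y' x y) u v))"
    by (intro psd_kernel_scale[OF half] psd_kernel_add psd_kernel_link Xp Xm Yp Ym)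
  thus "psd_kernel (box4 lA a2 b2 lB) (\<lambda>u v. link a1 b1 X' Y' u v - link a1 b1 X Y u v)"
    unfolding link_add_diff_diff_add by (simp add: diff_divide_distrib)
qed

section \<open>Channels and their Choi operators\<close>

lemma bipartite_channelD:
  assumes "is_bipartite_channel a1 b1 a2 b2 N"
  shows "\<And>X. X \<in> carrier_mat (a1*b1) (a1*b1) \<Longrightarrow> N X \<in> carrier_mat (a2*b2) (a2*b2)"
    and "\<And>X Y a b. X \<in> carrier_mat (a1*b1) (a1*b1) \<Longrightarrow> Y \<in> carrier_mat (a1*b1) (a1*b1) \<Longrightarrow>
           N (a \<cdot>\<^sub>m X + b \<cdot>\<^sub>m Y) = a \<cdot>\<^sub>m N X + b \<cdot>\<^sub>m N Y"
    and "\<And>X. X \<in> carrier_mat (a1*b1) (a1*b1) \<Longrightarrow> tr (N X) = tr X"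
    and "\<And>k X. X \<in> carrier_mat (k*(a1*b1)) (k*(a1*b1)) \<Longrightarrow> psd X \<Longrightarrow>
           psd (ext_id k 1 (a1*b1) (a2*b2) N X)"
    and "0 < a1" "0 < b1" "0 < a2" "0 < b2"
  using assms unfolding is_bipartite_channel_def by auto

lemma ext_id_dim[simp]:
  "dim_row (ext_id dl dr din dout N X) = dl*dout*dr" "dim_col (ext_id dl dr din dout N X) = dl*dout*dr"
  unfolding ext_id_def by simp_all

lemma ext_id_entry:
  assumes "l < dl" "k < dout" "m < dr" "l' < dl" "k' < dout" "m' < dr"
  shows "ext_id dl dr din dout N X $$ ((l*dout+k)*dr+m, (l'*dout+k')*dr+m') =
    N (mat din din (\<lambda>(p,q). X $$ ((l*din+p)*dr+m, (l'*din+q)*dr+m'))) $$ (k,k')"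
proof -
  have "(l*dout+k)*dr+m < dl*dout*dr" "(l'*dout+k')*dr+m' < dl*dout*dr"
    using assms by (auto intro!: mixed_radix3_less)
  thus ?thesis unfolding ext_id_def using assms by (simp add: mixed_radix3_digits Let_def)
qed

definition unit_mat :: "nat \<Rightarrow> nat \<Rightarrow> nat \<Rightarrow> complex mat" where
  "unit_mat n p q = mat n n (\<lambda>(i,j). if i = p \<and> j = q then 1 else 0)"

lemma unit_mat_entry:
  "i < n \<Longrightarrow> j < n \<Longrightarrow> unit_mat n p q $$ (i,j) = (if i = p \<and> j = q then 1 else 0)"
  unfolding unit_mat_def by simp

lemma unit_mat_carrier[simp]: "unit_mat n p q \<in> carrier_mat n n"
  unfolding unit_mat_def by simp

lemma unit_mat_dims[simp]: "dim_row (unit_mat n p q) = n" "dim_col (unit_mat n p q) = n"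
  unfolding unit_mat_def by simp_all

lemma channel_entry_expand:
  assumes ch: "is_bipartite_channel a1 b1 a2 b2 N"
    and B: "B \<in> carrier_mat (a1*b1) (a1*b1)" and i: "i < a2*b2" and j: "j < a2*b2"
  shows "N B $$ (i,j) = (\<Sum>p<a1*b1. \<Sum>q<a1*b1. B $$ (p,q) * N (unit_mat (a1*b1) p q) $$ (i,j))"
proof -
  let ?n = "a1*b1"
  note cp = bipartite_channelD[OF ch]
  let ?M = "\<lambda>S. mat ?n ?n (\<lambda>(p,q). if (p,q) \<in> S then B $$ (p,q) else 0)"
  have main: "N (?M S) $$ (i,j) = (\<Sum>s\<in>S. B $$ s * N (unit_mat ?n (fst s) (snd s)) $$ (i,j))"
    if "finite S" "S \<subseteq> {..<?n} \<times> {..<?n}" for S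
    using that
  proof (induction S rule: finite_subset_induct)
    case empty
    let ?Z = "?M {}"
    have Zc: "?Z \<in> carrier_mat ?n ?n" by simp
    have "?Z = 0 \<cdot>\<^sub>m ?Z + 0 \<cdot>\<^sub>m ?Z" by (rule eq_matI) auto
    hence "N ?Z = 0 \<cdot>\<^sub>m N ?Z + 0 \<cdot>\<^sub>m N ?Z" using cp(2)[OF Zc Zc] by metis
    hence "N ?Z $$ (i,j) = (0 \<cdot>\<^sub>m N ?Z + 0 \<cdot>\<^sub>m N ?Z) $$ (i,j)" by simp
    also have "\<dots> = 0" using cp(1)[OF Zc] i j by simp
    finally show ?case by (simp add: case_prod_unfold)
  next
    case (insert s S)
    obtain p q where s: "s = (p,q)" by (cases s) auto
    have pq: "p < ?n" "q < ?n" using insert(2) s by auto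
    have MS: "?M S \<in> carrier_mat ?n ?n" by simp
    have "?M (insert s S) = 1 \<cdot>\<^sub>m ?M S + (B $$ (p,q)) \<cdot>\<^sub>m unit_mat ?n p q"
      using insert(3) unfolding s by (intro eq_matI) (auto simp: unit_mat_def)
    hence "N (?M (insert s S)) = 1 \<cdot>\<^sub>m N (?M S) + (B $$ (p,q)) \<cdot>\<^sub>m N (unit_mat ?n p q)"
      using cp(2)[OF MS unit_mat_carrier] by metis
    hence "N (?M (insert s S)) $$ (i,j) = N (?M S) $$ (i,j) + B $$ (p,q) * N (unit_mat ?n p q) $$ (i,j)"
      using carrier_matD[OF cp(1)[OF MS]] carrier_matD[OF cp(1)[OF unit_mat_carrier]] i j by simp
    thus ?case using insert(3,4) insert.IH s by (simp add: insert(1))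
  qed
  have "?M ({..<?n} \<times> {..<?n}) = B" by (rule eq_matI) (use B in auto)
  hence "N B $$ (i,j) = (\<Sum>s\<in>{..<?n} \<times> {..<?n}. B $$ s * N (unit_mat ?n (fst s) (snd s)) $$ (i,j))"
    using main[of "{..<?n} \<times> {..<?n}"] by simp
  also have "\<dots> = (\<Sum>p<?n. \<Sum>q<?n. B $$ (p,q) * N (unit_mat ?n p q) $$ (i,j))"
    by (simp add: sum.cartesian_product')
  finally show ?thesis .
qed

lemma channel_psd:
  assumes ch: "is_bipartite_channel a1 b1 a2 b2 N"
    and X: "X \<in> carrier_mat (a1*b1) (a1*b1)" and p: "psd X"
  shows "psd (N X)"
proof -
  note cp = bipartite_channelD[OF ch]
  let ?E = "ext_id 1 1 (a1*b1) (a2*b2) N X"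
  have X1: "X \<in> carrier_mat (1*(a1*b1)) (1*(a1*b1))" using X by simp
  have pE: "psd ?E" by (rule cp(4)[OF X1 p])
  have Ec: "?E \<in> carrier_mat (a2*b2) (a2*b2)" unfolding ext_id_def by simp
  have NX: "N X \<in> carrier_mat (a2*b2) (a2*b2)" by (rule cp(1)[OF X])
  have mX: "mat (a1*b1) (a1*b1) (\<lambda>(p,q). X $$ ((0*(a1*b1)+p)*1+0, (0*(a1*b1)+q)*1+0)) = X"
    by (rule eq_matI) (use X in auto)
  have ent: "?E $$ (i,j) = N X $$ (i,j)" if "i < a2*b2" "j < a2*b2" for i j
    using ext_id_entry[of 0 1 i "a2*b2" 0 1 0 j 0 "a1*b1" N X] that mX by simp
  have "psd_kernel {..<a2*b2} (\<lambda>i j. ?E $$ (i,j))" using pE psd_iff_psd_kernel[OF Ec] by simp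
  moreover have "psd_kernel {..<a2*b2} (\<lambda>i j. N X $$ (i,j)) = psd_kernel {..<a2*b2} (\<lambda>i j. ?E $$ (i,j))"
    by (rule psd_kernel_cong, rule ent[symmetric]) auto
  ultimately have "psd_kernel {..<a2*b2} (\<lambda>i j. N X $$ (i,j))" by simp
  thus ?thesis using psd_iff_psd_kernel[OF NX] by simp
qed

lemma hermitian_mat_diff:
  assumes "A \<in> carrier_mat n n" "B \<in> carrier_mat n n" "hermitian_mat A n" "hermitian_mat B n"
  shows "hermitian_mat (A - B) n"
  unfolding hermitian_mat_def
proof (intro allI impI)
  fix i j assume ij: "i < n" "j < n"
  have "A $$ (j,i) = cnj (A $$ (i,j))" "B $$ (j,i) = cnj (B $$ (i,j))"
    using assms(3,4) ij unfolding hermitian_mat_def by blast+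
  thus "(A - B) $$ (j,i) = cnj ((A - B) $$ (i,j))" using assms(1,2) ij by simp
qed

lemma psd_shift_hermitian_mat:
  assumes H: "H \<in> carrier_mat n n" and h: "hermitian_mat H n"
  obtains c where "c \<ge> 0" "psd (complex_of_real c \<cdot>\<^sub>m 1\<^sub>m n + H)"
proof -
  have hH: "H $$ (j,i) = cnj (H $$ (i,j))" if "i \<in> {..<n}" "j \<in> {..<n}" for i j
    using h that unfolding hermitian_mat_def lessThan_iff by blast
  obtain c where c: "c \<ge> 0"
    and plus: "psd_kernel {..<n} (\<lambda>i j. complex_of_real c * (if i = j then 1 else 0) + H $$ (i,j))"
    by (rule psd_kernel_shift_hermitian[of "{..<n}" "\<lambda>i j. H $$ (i,j)", OF finite_lessThan hH])
  have "psd_kernel {..<n} (\<lambda>i j. (complex_of_real c \<cdot>\<^sub>m 1\<^sub>m n + H) $$ (i,j))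
      = psd_kernel {..<n} (\<lambda>i j. complex_of_real c * (if i = j then 1 else 0) + H $$ (i,j))"
    using H by (intro psd_kernel_cong) simp
  hence "psd (complex_of_real c \<cdot>\<^sub>m 1\<^sub>m n + H)"
    using plus psd_iff_psd_kernel[OF add_carrier_mat[OF H]] by simp
  thus ?thesis using that c by blast
qed

text \<open>A hermitian \<open>H\<close> is the difference of the positive operators \<open>c\<close>\<open>I + H\<close> and \<open>c\<close>\<open>I\<close>.\<close>

lemma channel_hermitian:
  assumes ch: "is_bipartite_channel a1 b1 a2 b2 N"
    and H: "H \<in> carrier_mat (a1*b1) (a1*b1)" and h: "hermitian_mat H (a1*b1)"
  shows "hermitian_mat (N H) (a2*b2)"
proof -
  note cp = bipartite_channelD[OF ch]
  let ?n = "a1*b1"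
  obtain c where c: "c \<ge> 0" and pA: "psd (complex_of_real c \<cdot>\<^sub>m 1\<^sub>m ?n + H)"
    using psd_shift_hermitian_mat[OF H h] by blast
  define C where "C = complex_of_real c \<cdot>\<^sub>m 1\<^sub>m ?n"
  define A where "A = C + H"
  have Cc: "C \<in> carrier_mat ?n ?n" unfolding C_def by simp
  have Ac: "A \<in> carrier_mat ?n ?n" unfolding A_def using H by simp
  have hA: "hermitian_mat (N A) (a2*b2)"
    using psd_hermitian_mat[OF cp(1)[OF Ac] channel_psd[OF ch Ac]] pA unfolding A_def C_def by blast
  have hC: "hermitian_mat (N C) (a2*b2)"
    using psd_hermitian_mat[OF cp(1)[OF Cc] channel_psd[OF ch Cc]] psd_smult_one[OF c]
    unfolding C_def by blast
  have "H = 1 \<cdot>\<^sub>m A + (-1) \<cdot>\<^sub>m C"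
    by (rule eq_matI) (use H in \<open>auto simp: A_def C_def\<close>)
  hence "N H = 1 \<cdot>\<^sub>m N A + (-1) \<cdot>\<^sub>m N C" using cp(2)[OF Ac Cc] by metis
  also have "\<dots> = N A - N C"
    using cp(1)[OF Ac] cp(1)[OF Cc] by (intro eq_matI) auto
  finally show ?thesis using hermitian_mat_diff[OF cp(1)[OF Ac] cp(1)[OF Cc] hA hC] by simp
qed

lemma channel_unit_mat_adjoint:
  assumes ch: "is_bipartite_channel a1 b1 a2 b2 N"
    and p: "p < a1*b1" and q: "q < a1*b1" and k: "k < a2*b2" and k': "k' < a2*b2"
  shows "N (unit_mat (a1*b1) q p) $$ (k',k) = cnj (N (unit_mat (a1*b1) p q) $$ (k,k'))"
proof -
  note cp = bipartite_channelD[OF ch]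
  let ?n = "a1*b1"
  define A where "A = unit_mat ?n p q + unit_mat ?n q p"
  define B where "B = \<i> \<cdot>\<^sub>m unit_mat ?n p q + (- \<i>) \<cdot>\<^sub>m unit_mat ?n q p"
  have Ac: "A \<in> carrier_mat ?n ?n" "B \<in> carrier_mat ?n ?n" unfolding A_def B_def by simp_all
  have hA: "hermitian_mat A ?n" and hB: "hermitian_mat B ?n"
    unfolding hermitian_mat_def
  proof (safe)
    fix i j assume ij: "i < ?n" "j < ?n"
    have swap: "unit_mat ?n p q $$ (j,i) = unit_mat ?n q p $$ (i,j)"
      "unit_mat ?n q p $$ (j,i) = unit_mat ?n p q $$ (i,j)"
      using ij unfolding unit_mat_entry[OF ij(2,1)] unit_mat_entry[OF ij] by auto
    have real: "cnj (unit_mat ?n p q $$ (i,j)) = unit_mat ?n p q $$ (i,j)"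
      "cnj (unit_mat ?n q p $$ (i,j)) = unit_mat ?n q p $$ (i,j)"
      unfolding unit_mat_entry[OF ij] by simp_all
    show "A $$ (j,i) = cnj (A $$ (i,j))" "B $$ (j,i) = cnj (B $$ (i,j))"
      using ij unfolding A_def B_def by (simp_all add: swap real)
  qed
  have split_pq: "x = (1/2)*(x+y) + (-\<i>/2)*(\<i>*x + (-\<i>)*y)"
    and split_qp: "y = (1/2)*(x+y) + (\<i>/2)*(\<i>*x + (-\<i>)*y)" for x y :: complex
    by (simp_all add: complex_eq_iff field_simps)
  have e1: "unit_mat ?n p q = (1/2) \<cdot>\<^sub>m A + (- \<i>/2) \<cdot>\<^sub>m B"
  proof (rule eq_matI)
    fix i j assume "i < dim_row ((1/2) \<cdot>\<^sub>m A + (- \<i>/2) \<cdot>\<^sub>m B)" "j < dim_col ((1/2) \<cdot>\<^sub>m A + (- \<i>/2) \<cdot>\<^sub>m B)"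
    hence ij: "i < ?n" "j < ?n" using Ac by auto
    have "((1/2) \<cdot>\<^sub>m A + (- \<i>/2) \<cdot>\<^sub>m B) $$ (i,j) = (1/2)*(unit_mat ?n p q $$ (i,j) + unit_mat ?n q p $$ (i,j)) + (-\<i>/2)*(\<i>*unit_mat ?n p q $$ (i,j) + (-\<i>)*unit_mat ?n q p $$ (i,j))"
      using ij unfolding A_def B_def by simp
    thus "unit_mat ?n p q $$ (i,j) = ((1/2) \<cdot>\<^sub>m A + (- \<i>/2) \<cdot>\<^sub>m B) $$ (i,j)" using split_pq by metis
  qed (use Ac in auto)
  have e2: "unit_mat ?n q p = (1/2) \<cdot>\<^sub>m A + (\<i>/2) \<cdot>\<^sub>m B"
  proof (rule eq_matI)
    fix i j assume "i < dim_row ((1/2) \<cdot>\<^sub>m A + (\<i>/2) \<cdot>\<^sub>m B)" "j < dim_col ((1/2) \<cdot>\<^sub>m A + (\<i>/2) \<cdot>\<^sub>m B)"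
    hence ij: "i < ?n" "j < ?n" using Ac by auto
    have "((1/2) \<cdot>\<^sub>m A + (\<i>/2) \<cdot>\<^sub>m B) $$ (i,j) = (1/2)*(unit_mat ?n p q $$ (i,j) + unit_mat ?n q p $$ (i,j)) + (\<i>/2)*(\<i>*unit_mat ?n p q $$ (i,j) + (-\<i>)*unit_mat ?n q p $$ (i,j))"
      using ij unfolding A_def B_def by simp
    thus "unit_mat ?n q p $$ (i,j) = ((1/2) \<cdot>\<^sub>m A + (\<i>/2) \<cdot>\<^sub>m B) $$ (i,j)" using split_qp by metis
  qed (use Ac in auto)
  have N1: "N (unit_mat ?n p q) = (1/2) \<cdot>\<^sub>m N A + (- \<i>/2) \<cdot>\<^sub>m N B" unfolding e1 by (rule cp(2)[OF Ac])
  have N2: "N (unit_mat ?n q p) = (1/2) \<cdot>\<^sub>m N A + (\<i>/2) \<cdot>\<^sub>m N B" unfolding e2 by (rule cp(2)[OF Ac])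
  have hNA: "hermitian_mat (N A) (a2*b2)" by (rule channel_hermitian[OF ch Ac(1) hA])
  have hNB: "hermitian_mat (N B) (a2*b2)" by (rule channel_hermitian[OF ch Ac(2) hB])
  have 1: "N A $$ (k',k) = cnj (N A $$ (k,k'))" using hNA k k' unfolding hermitian_mat_def by blast
  have 2: "N B $$ (k',k) = cnj (N B $$ (k,k'))" using hNB k k' unfolding hermitian_mat_def by blast
  show ?thesis unfolding N1 N2
    using k k' carrier_matD[OF cp(1)[OF Ac(1)]] carrier_matD[OF cp(1)[OF Ac(2)]]
    by (simp add: 1 2)
qed

text \<open>The entries of the Choi operator:
  \<open>\<langle>x a b y|J|x' a' b' y'\<rangle> = \<langle>a b|\<N>(|x y\<rangle>\<langle>x' y'|)|a' b'\<rangle>\<close>.\<close>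

definition choi_entry :: "nat \<Rightarrow> nat \<Rightarrow> nat \<Rightarrow> (complex mat \<Rightarrow> complex mat) \<Rightarrow> nat\<times>nat\<times>nat\<times>nat \<Rightarrow> nat\<times>nat\<times>nat\<times>nat \<Rightarrow> complex" where
  "choi_entry a1 b1 b2 N = (\<lambda>(x,a,b,y) (x',a',b',y'). N (unit_mat (a1*b1) (x*b1+y) (x'*b1+y')) $$ (a*b2+b, a'*b2+b'))"

lemma kernel4_ext_id_eq_link_choi_entry:
  assumes ch: "is_bipartite_channel a1 b1 a2 b2 N"
    and u: "u \<in> box4 lA a2 b2 lB" and u2: "u2 \<in> box4 lA a2 b2 lB"
  shows "kernel4 (ext_id lA lB (a1*b1) (a2*b2) N \<rho>) a2 b2 lB u u2 = link a1 b1 (kernel4 \<rho> a1 b1 lB) (choi_entry a1 b1 b2 N) u u2"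
proof -
  obtain l a b m where uu: "u = (l,a,b,m)" by (cases u) auto
  obtain l' a' b' m' where uu2: "u2 = (l',a',b',m')" by (cases u2) auto
  have r: "l < lA" "a < a2" "b < b2" "m < lB" "l' < lA" "a' < a2" "b' < b2" "m' < lB"
    using u u2 uu uu2 by (auto simp: mem_box4)
  have k: "a*b2+b < a2*b2" "a'*b2+b' < a2*b2" using r by (auto intro: mixed_radix_less)
  let ?n = "a1*b1"
  let ?B = "mat ?n ?n (\<lambda>(p,q). \<rho> $$ ((l*?n+p)*lB+m, (l'*?n+q)*lB+m'))"
  have "kernel4 (ext_id lA lB ?n (a2*b2) N \<rho>) a2 b2 lB u u2 = N ?B $$ (a*b2+b, a'*b2+b')"
    unfolding kernel4_def uu uu2 idx4_eq_mid using r k by (simp add: ext_id_entry)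
  also have "\<dots> = (\<Sum>p<?n. \<Sum>q<?n. ?B $$ (p,q) * N (unit_mat ?n p q) $$ (a*b2+b, a'*b2+b'))"
    by (rule channel_entry_expand[OF ch _ k]) simp
  also have "\<dots> = (\<Sum>p<?n. \<Sum>q<?n. \<rho> $$ ((l*?n+p)*lB+m, (l'*?n+q)*lB+m') * N (unit_mat ?n p q) $$ (a*b2+b, a'*b2+b'))"
    by (intro sum.cong refl) simp
  also have "\<dots> = (\<Sum>p1<a1. \<Sum>p2<b1. \<Sum>q1<a1. \<Sum>q2<b1.
      \<rho> $$ ((l*?n+(p1*b1+p2))*lB+m, (l'*?n+(q1*b1+q2))*lB+m') * N (unit_mat ?n (p1*b1+p2) (q1*b1+q2)) $$ (a*b2+b, a'*b2+b'))"
    by (simp only: sum_lessThan_mult)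
  also have "\<dots> = link a1 b1 (kernel4 \<rho> a1 b1 lB) (choi_entry a1 b1 b2 N) u u2"
    unfolding uu uu2 link_expand kernel4_def choi_entry_def by (simp add: idx4_eq_mid)
  finally show ?thesis .
qed

lemma kernel4_choi:
  assumes u: "u \<in> box4 a1 a2 b2 b1" and u2: "u2 \<in> box4 a1 a2 b2 b1"
  shows "kernel4 (choi a1 b1 a2 b2 N) a2 b2 b1 u u2 = choi_entry a1 b1 b2 N u u2"
proof -
  obtain x a b y where uu: "u = (x,a,b,y)" by (cases u) auto
  obtain x' a' b' y' where uu2: "u2 = (x',a',b',y')" by (cases u2) auto
  have r: "x < a1" "a < a2" "b < b2" "y < b1" "x' < a1" "a' < a2" "b' < b2" "y' < b1"
    using u u2 uu uu2 by (auto simp: mem_box4)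
  have k: "a*b2+b < a2*b2" "a'*b2+b' < a2*b2" using r by (auto intro: mixed_radix_less)
  let ?n = "a1*b1"
  have inner: "mat ?n ?n (\<lambda>(p,q). choi_input a1 b1 $$ ((x*?n+p)*b1+y, (x'*?n+q)*b1+y')) = unit_mat ?n (x*b1+y) (x'*b1+y')"
  proof (rule eq_matI)
    fix p q assume p: "p < dim_row (unit_mat ?n (x*b1+y) (x'*b1+y'))" and q: "q < dim_col (unit_mat ?n (x*b1+y) (x'*b1+y'))"
    hence p: "p < a1*b1" and q: "q < a1*b1" by (simp_all add: unit_mat_def)
    have b1: "0 < b1" using r by simp
    define p1 where "p1 = p div b1"
    define p2 where "p2 = p mod b1"
    define q1 where "q1 = q div b1"
    define q2 where "q2 = q mod b1"
    have hp: "p = p1*b1+p2" "q = q1*b1+q2" unfolding p1_def p2_def q1_def q2_def by simp_all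
    have pd: "p1 < a1" "p2 < b1" "q1 < a1" "q2 < b1"
      using p q b1 unfolding p1_def p2_def q1_def q2_def by (simp_all add: less_mult_imp_div_less)
    have ep: "(x*?n+p)*b1+y = idx4 a1 b1 b1 (x, p1, p2, y)"
      unfolding idx4_def hp by (simp add: algebra_simps)
    have eq: "(x'*?n+q)*b1+y' = idx4 a1 b1 b1 (x', q1, q2, y')"
      unfolding idx4_def hp by (simp add: algebra_simps)
    have lt: "idx4 a1 b1 b1 (x, p1, p2, y) < a1*a1*b1*b1" "idx4 a1 b1 b1 (x', q1, q2, y') < a1*a1*b1*b1"
      using pd r by (auto intro!: idx4_less simp: mem_box4)
    have iff: "(x = p1 \<and> x' = q1 \<and> p2 = y \<and> q2 = y') \<longleftrightarrow> (p = x*b1+y \<and> q = x'*b1+y')"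
      unfolding hp using pd r mixed_radix_eq_iff by metis
    have "mat ?n ?n (\<lambda>(p,q). choi_input a1 b1 $$ ((x*?n+p)*b1+y, (x'*?n+q)*b1+y')) $$ (p,q)
       = choi_input a1 b1 $$ (idx4 a1 b1 b1 (x, p1, p2, y), idx4 a1 b1 b1 (x', q1, q2, y'))"
      using p q unfolding ep[symmetric] eq[symmetric] by simp
    also have "\<dots> = (if x = p1 \<and> x' = q1 \<and> p2 = y \<and> q2 = y' then 1 else 0)"
      unfolding choi_input_def using lt pd r by (simp add: idx4_digits Let_def)
    also have "\<dots> = unit_mat ?n (x*b1+y) (x'*b1+y') $$ (p,q)"
      unfolding iff unit_mat_def using p q by simp
    finally show "mat ?n ?n (\<lambda>(p,q). choi_input a1 b1 $$ ((x*?n+p)*b1+y, (x'*?n+q)*b1+y')) $$ (p,q) = unit_mat ?n (x*b1+y) (x'*b1+y') $$ (p,q)" .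
  qed (simp_all add: unit_mat_def)
  show ?thesis
    unfolding kernel4_def uu uu2 idx4_eq_mid choi_def using r k
    by (simp add: ext_id_entry inner choi_entry_def)
qed

lemma choi_entry_hermitian:
  assumes ch: "is_bipartite_channel a1 b1 a2 b2 N"
    and x: "x \<in> box4 a1 a2 b2 b1" and y: "y \<in> box4 a1 a2 b2 b1"
  shows "choi_entry a1 b1 b2 N y x = cnj (choi_entry a1 b1 b2 N x y)"
proof -
  obtain x1 a b x4 where xx: "x = (x1,a,b,x4)" by (cases x) auto
  obtain y1 a' b' y4 where yy: "y = (y1,a',b',y4)" by (cases y) auto
  have r: "x1 < a1" "a < a2" "b < b2" "x4 < b1" "y1 < a1" "a' < a2" "b' < b2" "y4 < b1"
    using x y xx yy by (auto simp: mem_box4)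
  have i: "x1*b1+x4 < a1*b1" "y1*b1+y4 < a1*b1" "a*b2+b < a2*b2" "a'*b2+b' < a2*b2"
    using r by (auto intro: mixed_radix_less)
  show ?thesis unfolding xx yy choi_entry_def using channel_unit_mat_adjoint[OF ch i] by simp
qed

lemma choi_kernel4_hermitian:
  assumes ch: "is_bipartite_channel a1 b1 a2 b2 N"
    and x: "x \<in> box4 a1 a2 b2 b1" and y: "y \<in> box4 a1 a2 b2 b1"
  shows "kernel4 (choi a1 b1 a2 b2 N) a2 b2 b1 y x = cnj (kernel4 (choi a1 b1 a2 b2 N) a2 b2 b1 x y)"
  unfolding kernel4_choi[OF x y] kernel4_choi[OF y x] by (rule choi_entry_hermitian[OF ch x y])

lemma tr_ext_id:
  assumes ch: "is_bipartite_channel a1 b1 a2 b2 N"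
    and \<rho>c: "\<rho> \<in> carrier_mat (lA*a1*b1*lB) (lA*a1*b1*lB)"
  shows "tr (ext_id lA lB (a1*b1) (a2*b2) N \<rho>) = tr \<rho>"
proof -
  note cp = bipartite_channelD[OF ch]
  let ?din = "a1*b1" and ?dout = "a2*b2"
  let ?B = "\<lambda>l m. mat ?din ?din (\<lambda>(p,q). \<rho> $$ ((l*?din+p)*lB+m, (l*?din+q)*lB+m))"
  have "tr (ext_id lA lB ?din ?dout N \<rho>) = (\<Sum>l<lA. \<Sum>k<?dout. \<Sum>m<lB. ext_id lA lB ?din ?dout N \<rho> $$ ((l*?dout+k)*lB+m, (l*?dout+k)*lB+m))"
    unfolding tr_def ext_id_dim by (rule sum_lessThan_mult3)
  also have "\<dots> = (\<Sum>l<lA. \<Sum>k<?dout. \<Sum>m<lB. N (?B l m) $$ (k,k))"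
    by (intro sum.cong refl) (simp add: ext_id_entry)
  also have "\<dots> = (\<Sum>l<lA. \<Sum>m<lB. \<Sum>k<?dout. N (?B l m) $$ (k,k))"
    by (rule sum.cong[OF refl], rule sum.swap)
  also have "\<dots> = (\<Sum>l<lA. \<Sum>m<lB. tr (N (?B l m)))"
  proof (intro sum.cong refl)
    fix l m
    have "N (?B l m) \<in> carrier_mat ?dout ?dout" by (rule cp(1)) simp
    thus "(\<Sum>k<?dout. N (?B l m) $$ (k,k)) = tr (N (?B l m))" unfolding tr_def by simp
  qed
  also have "\<dots> = (\<Sum>l<lA. \<Sum>m<lB. tr (?B l m))"
    by (intro sum.cong refl) (rule cp(3), simp)
  also have "\<dots> = (\<Sum>l<lA. \<Sum>m<lB. \<Sum>p<?din. \<rho> $$ ((l*?din+p)*lB+m, (l*?din+p)*lB+m))"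
    unfolding tr_def by (intro sum.cong refl) simp_all
  also have "\<dots> = (\<Sum>l<lA. \<Sum>p<?din. \<Sum>m<lB. \<rho> $$ ((l*?din+p)*lB+m, (l*?din+p)*lB+m))"
    by (rule sum.cong[OF refl], rule sum.swap)
  also have "\<dots> = tr \<rho>"
  proof -
    have d: "dim_row \<rho> = lA*(a1*b1)*lB" using \<rho>c by (simp add: mult.assoc)
    show ?thesis unfolding tr_def d by (rule sum_lessThan_mult3[symmetric])
  qed
  finally show ?thesis .
qed

section \<open>Operator norm\<close>

lemma vnorm_eq_L2_set: "vnorm v = L2_set (\<lambda>i. cmod (v $ i)) {..<dim_vec v}"
  unfolding vnorm_def L2_set_def ..

lemma vnorm_nonneg[simp]: "0 \<le> vnorm v" unfolding vnorm_def by (simp add: sum_nonneg)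

lemma cmod_mult_vec_entry_le:
  assumes R: "R \<in> carrier_mat n n" and v: "v \<in> carrier_vec n" and i: "i < n"
  shows "cmod ((R *\<^sub>v v) $ i) \<le> (\<Sum>j<n. cmod (R $$ (i,j)) * cmod (v $ j))"
proof -
  have "(R *\<^sub>v v) $ i = (\<Sum>j<n. R $$ (i,j) * v $ j)"
    using R v i by (simp add: scalar_prod_def atLeast0LessThan)
  also have "cmod \<dots> \<le> (\<Sum>j<n. cmod (R $$ (i,j) * v $ j))" by (rule norm_sum)
  finally show ?thesis by (simp add: norm_mult)
qed

lemma vnorm_mult_vec_le_sum:
  assumes R: "R \<in> carrier_mat n n" and v: "v \<in> carrier_vec n" and nv: "vnorm v \<le> 1"
  shows "vnorm (R *\<^sub>v v) \<le> (\<Sum>i<n. \<Sum>j<n. cmod (R $$ (i,j)))"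
proof -
  have dv: "dim_vec v = n" "dim_vec (R *\<^sub>v v) = n" using R v by auto
  have vj: "cmod (v $ j) \<le> 1" if "j < n" for j
    using member_le_L2_set[of "{..<n}" j "\<lambda>i. cmod (v $ i)"] that nv unfolding vnorm_eq_L2_set dv by simp
  have "vnorm (R *\<^sub>v v) \<le> (\<Sum>i<n. cmod ((R *\<^sub>v v) $ i))"
    unfolding vnorm_eq_L2_set dv by (rule L2_set_le_sum) simp
  also have "\<dots> \<le> (\<Sum>i<n. \<Sum>j<n. cmod (R $$ (i,j)) * cmod (v $ j))"
    by (intro sum_mono cmod_mult_vec_entry_le[OF R v]) simp
  also have "\<dots> \<le> (\<Sum>i<n. \<Sum>j<n. cmod (R $$ (i,j)))"
    by (intro sum_mono) (use vj in \<open>auto intro: mult_left_le\<close>)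
  finally show ?thesis .
qed

lemma vnorm_mult_vec_le_opnorm:
  assumes R: "R \<in> carrier_mat n n" and v: "v \<in> carrier_vec n" and nv: "vnorm v \<le> 1"
  shows "vnorm (R *\<^sub>v v) \<le> opnorm R"
  unfolding opnorm_def
proof (rule cSup_upper)
  show "vnorm (R *\<^sub>v v) \<in> {vnorm (R *\<^sub>v v) |v. v \<in> carrier_vec (dim_col R) \<and> vnorm v \<le> 1}"
    using R v nv by auto
  show "bdd_above {vnorm (R *\<^sub>v v) |v. v \<in> carrier_vec (dim_col R) \<and> vnorm v \<le> 1}"
    unfolding bdd_above_def using vnorm_mult_vec_le_sum[OF R] R by auto
qed

lemma vnorm_smult: "vnorm (c \<cdot>\<^sub>v v) = cmod c * vnorm v"
proof -
  have "vnorm (c \<cdot>\<^sub>v v) = L2_set (\<lambda>i. cmod c * cmod (v $ i)) {..<dim_vec v}"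
    unfolding vnorm_eq_L2_set by (intro L2_set_cong) (auto simp: norm_mult)
  also have "\<dots> = cmod c * vnorm v" unfolding vnorm_eq_L2_set by (simp add: L2_set_right_distrib)
  finally show ?thesis .
qed

lemma vnorm_eq_0_entry: "vnorm v = 0 \<Longrightarrow> i < dim_vec v \<Longrightarrow> v $ i = 0"
  unfolding vnorm_eq_L2_set by (subst (asm) L2_set_eq_0_iff) auto

lemma vnorm_mult_vec_le:
  assumes R: "R \<in> carrier_mat n n" and v: "v \<in> carrier_vec n"
  shows "vnorm (R *\<^sub>v v) \<le> opnorm R * vnorm v"
proof (cases "vnorm v = 0")
  case True
  have "R *\<^sub>v v = 0\<^sub>v n"
  proof (rule eq_vecI)
    fix i assume "i < dim_vec (0\<^sub>v n :: complex vec)"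
    hence i: "i < n" by simp
    have "(R *\<^sub>v v) $ i = (\<Sum>j<n. R $$ (i,j) * v $ j)"
      using R v i by (simp add: scalar_prod_def atLeast0LessThan)
    also have "\<dots> = 0" using vnorm_eq_0_entry[OF True] v by auto
    finally show "(R *\<^sub>v v) $ i = 0\<^sub>v n $ i" using i by simp
  qed (use R in auto)
  hence "vnorm (R *\<^sub>v v) = 0" unfolding vnorm_def by simp
  thus ?thesis using True by simp
next
  case False
  have pos: "vnorm v > 0" using False unfolding vnorm_eq_L2_set by (simp add: order_le_neq_trans)
  define w where "w = complex_of_real (1 / vnorm v) \<cdot>\<^sub>v v"
  have w: "w \<in> carrier_vec n" unfolding w_def using v by simp
  have nw: "vnorm w = 1" unfolding w_def vnorm_smult using pos by (simp add: norm_divide)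
  have "R *\<^sub>v w = complex_of_real (1 / vnorm v) \<cdot>\<^sub>v (R *\<^sub>v v)" unfolding w_def by (rule mult_mat_vec[OF R v])
  hence "vnorm (R *\<^sub>v w) = vnorm (R *\<^sub>v v) / vnorm v" using pos by (simp add: vnorm_smult norm_divide)
  moreover have "vnorm (R *\<^sub>v w) \<le> opnorm R" using vnorm_mult_vec_le_opnorm[OF R w] nw by simp
  ultimately show ?thesis using pos by (simp add: divide_le_eq)
qed

lemma cscalar_prod_mult_vec_le_opnorm:
  assumes R: "R \<in> carrier_mat n n" and v: "v \<in> carrier_vec n"
  shows "Re ((R *\<^sub>v v) \<bullet>c v) \<le> opnorm R * (vnorm v)\<^sup>2"
proof -
  let ?x = "R *\<^sub>v v"
  have dv: "dim_vec v = n" "dim_vec ?x = n" using R v by auto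
  have e: "?x \<bullet>c v = (\<Sum>i<n. ?x $ i * cnj (v $ i))" using dv by (simp add: scalar_prod_def atLeast0LessThan)
  have "Re (?x \<bullet>c v) \<le> cmod (\<Sum>i<n. ?x $ i * cnj (v $ i))" unfolding e by (rule complex_Re_le_cmod)
  also have "\<dots> \<le> (\<Sum>i<n. \<bar>cmod (?x $ i)\<bar> * \<bar>cmod (v $ i)\<bar>)"
    by (rule order_trans[OF norm_sum]) (simp add: norm_mult)
  also have "\<dots> \<le> vnorm ?x * vnorm v" unfolding vnorm_eq_L2_set dv by (rule L2_set_mult_ineq)
  also have "\<dots> \<le> opnorm R * vnorm v * vnorm v"
    by (rule mult_right_mono[OF vnorm_mult_vec_le[OF R v]]) simp
  finally have "Re (?x \<bullet>c v) \<le> opnorm R * vnorm v * vnorm v" .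
  thus ?thesis by (simp add: power2_eq_square mult.assoc)
qed

lemma quad_form_le_opnorm:
  assumes R: "R \<in> carrier_mat n n"
  shows "Re (quad_form {..<n} (\<lambda>i j. R $$ (i,j)) u) \<le> opnorm R * (\<Sum>i<n. (cmod (u i))\<^sup>2)"
proof -
  have v: "vec n u \<in> carrier_vec n" by simp
  have "quad_form {..<n} (\<lambda>i j. R $$ (i,j)) u = quad_form {..<n} (\<lambda>i j. R $$ (i,j)) (\<lambda>i. vec n u $ i)"
    by (intro quad_form_cong_vec) auto
  also have "\<dots> = (R *\<^sub>v vec n u) \<bullet>c vec n u" using cscalar_prod_eq_quad_form[OF R v] by simp
  finally have e: "quad_form {..<n} (\<lambda>i j. R $$ (i,j)) u = (R *\<^sub>v vec n u) \<bullet>c vec n u" .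
  have "(vnorm (vec n u))\<^sup>2 = (\<Sum>i<n. (cmod (u i))\<^sup>2)" unfolding vnorm_def by (simp add: sum_nonneg)
  thus ?thesis using cscalar_prod_mult_vec_le_opnorm[OF R v] e by simp
qed

lemma quad_form_reindex_le_opnorm:
  assumes R: "R \<in> carrier_mat n n" and h: "bij_betw h P {..<n}"
  shows "Re (quad_form P (\<lambda>c c'. R $$ (h c, h c')) v) \<le> opnorm R * (\<Sum>c\<in>P. (cmod (v c))\<^sup>2)"
proof -
  let ?u = "v \<circ> inv_into P h"
  have vu: "v c = (?u \<circ> h) c" if "c \<in> P" for c
    using h that by (simp add: bij_betw_def)
  have "quad_form P (\<lambda>c c'. R $$ (h c, h c')) v = quad_form P (\<lambda>c c'. R $$ (h c, h c')) (?u \<circ> h)"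
    by (rule quad_form_cong_vec) (rule vu)
  also have "\<dots> = quad_form {..<n} (\<lambda>i j. R $$ (i,j)) ?u" by (rule quad_form_reindex[OF h])
  finally have "quad_form P (\<lambda>c c'. R $$ (h c, h c')) v = quad_form {..<n} (\<lambda>i j. R $$ (i,j)) ?u" .
  moreover have "(\<Sum>c\<in>P. (cmod (v c))\<^sup>2) = (\<Sum>i<n. (cmod (?u i))\<^sup>2)"
    using vu sum.reindex_bij_betw[OF h, of "\<lambda>i. (cmod (?u i))\<^sup>2"] by simp
  ultimately show ?thesis using quad_form_le_opnorm[OF R, of ?u] by simp
qed

text \<open>For positive \<open>K\<close>: \<open>Re tr(K R\<^sup>T) \<le> \<parallel>R\<parallel> tr K\<close>, from a Gram decomposition of \<open>K\<close>.\<close>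

lemma Re_sum_psd_kernel_mult_le_opnorm:
  assumes K: "psd_kernel P K" and fP: "finite P"
    and R: "R \<in> carrier_mat n n" and h: "bij_betw h P {..<n}"
  shows "Re (\<Sum>c\<in>P. \<Sum>c'\<in>P. K c c' * R $$ (h c, h c')) \<le> opnorm R * Re (\<Sum>c\<in>P. K c c)"
proof -
  obtain k :: nat and a where a: "\<forall>c\<in>P. \<forall>c'\<in>P. K c c' = (\<Sum>t<k. a t c * cnj (a t c'))"
    using psd_kernel_gram_decomp[OF fP K] by blast
  let ?R = "\<lambda>c c'. R $$ (h c, h c')"
  have "(\<Sum>c\<in>P. \<Sum>c'\<in>P. K c c' * ?R c c') = (\<Sum>c\<in>P. \<Sum>c'\<in>P. \<Sum>t<k. a t c * ?R c c' * cnj (a t c'))"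
  proof (intro sum.cong refl)
    fix c c' assume "c \<in> P" "c' \<in> P"
    hence "K c c' * ?R c c' = (\<Sum>t<k. a t c * cnj (a t c')) * ?R c c'" using a by simp
    also have "\<dots> = (\<Sum>t<k. a t c * ?R c c' * cnj (a t c'))"
      unfolding sum_distrib_right by (intro sum.cong refl) (simp add: mult_ac)
    finally show "K c c' * ?R c c' = (\<Sum>t<k. a t c * ?R c c' * cnj (a t c'))" .
  qed
  also have "\<dots> = (\<Sum>t<k. \<Sum>c\<in>P. \<Sum>c'\<in>P. a t c * ?R c c' * cnj (a t c'))"
    by (rule sum_rotate3[symmetric])
  also have "\<dots> = (\<Sum>t<k. quad_form P ?R (\<lambda>c. cnj (a t c)))"
    unfolding quad_form_def by simp
  finally have lhs: "(\<Sum>c\<in>P. \<Sum>c'\<in>P. K c c' * ?R c c') = (\<Sum>t<k. quad_form P ?R (\<lambda>c. cnj (a t c)))" .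
  have "(\<Sum>c\<in>P. K c c) = (\<Sum>c\<in>P. \<Sum>t<k. a t c * cnj (a t c))"
    using a by (intro sum.cong refl) simp
  also have "\<dots> = (\<Sum>t<k. \<Sum>c\<in>P. complex_of_real ((cmod (a t c))\<^sup>2))"
    by (subst sum.swap) (simp add: complex_norm_square[symmetric])
  finally have rhs: "Re (\<Sum>c\<in>P. K c c) = (\<Sum>t<k. \<Sum>c\<in>P. (cmod (a t c))\<^sup>2)" by (simp add: Re_sum)
  have "Re (\<Sum>t<k. quad_form P ?R (\<lambda>c. cnj (a t c))) \<le> (\<Sum>t<k. opnorm R * (\<Sum>c\<in>P. (cmod (a t c))\<^sup>2))"
    unfolding Re_sum
  proof (intro sum_mono)
    fix t
    show "Re (quad_form P ?R (\<lambda>c. cnj (a t c))) \<le> opnorm R * (\<Sum>c\<in>P. (cmod (a t c))\<^sup>2)"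
      using quad_form_reindex_le_opnorm[OF R h, of "\<lambda>c. cnj (a t c)"] by simp
  qed
  thus ?thesis unfolding lhs rhs by (simp add: sum_distrib_left)
qed

section \<open>Composing feasible operators\<close>

text \<open>Tracing out \<open>AB\<close> after linking with \<open>Q\<close> pairs each block \<open>S\<^sub>l\<^sub>m\<close> of \<open>S\<close> on \<open>A'B'\<close> with
  \<open>R = Tr\<^sub>A\<^sub>B Q\<close>.\<close>

lemma tr_link_le_opnorm:
  assumes S: "psd_kernel (box4 lA a1 b1 lB) S" and R: "R \<in> carrier_mat (a1*b1) (a1*b1)"
    and hR: "\<And>p q p' q'. p < a1 \<Longrightarrow> q < b1 \<Longrightarrow> p' < a1 \<Longrightarrow> q' < b1 \<Longrightarrow>
       R $$ (p*b1+q, p'*b1+q') = (\<Sum>a<a2. \<Sum>b<b2. Q (p,a,b,q) (p',a,b,q'))"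
  shows "Re (\<Sum>u\<in>box4 lA a2 b2 lB. link a1 b1 S Q u u) \<le> opnorm R * Re (\<Sum>x\<in>box4 lA a1 b1 lB. S x x)"
proof -
  let ?P = "{..<a1}\<times>{..<b1}"
  let ?h = "\<lambda>(p,q). p*b1+q"
  let ?S = "\<lambda>l m c c'. S (l,fst c,snd c,m) (l,fst c',snd c',m)"
  have "(\<Sum>u\<in>box4 lA a2 b2 lB. link a1 b1 S Q u u) = (\<Sum>l<lA. \<Sum>a<a2. \<Sum>b<b2. \<Sum>m<lB.
      \<Sum>p<a1. \<Sum>q<b1. \<Sum>p'<a1. \<Sum>q'<b1. S (l,p,q,m) (l,p',q',m) * Q (p,a,b,q) (p',a,b,q'))"
    by (simp add: sum_box4 link_expand)
  also have "\<dots> = (\<Sum>l<lA. \<Sum>m<lB. \<Sum>p<a1. \<Sum>q<b1. \<Sum>p'<a1. \<Sum>q'<b1. \<Sum>a<a2. \<Sum>b<b2.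
      S (l,p,q,m) (l,p',q',m) * Q (p,a,b,q) (p',a,b,q'))"
    by (rule sum.cong[OF refl], subst sum_rotate6, rule sum_rotate6)
  also have "\<dots> = (\<Sum>l<lA. \<Sum>m<lB. \<Sum>p<a1. \<Sum>q<b1. \<Sum>p'<a1. \<Sum>q'<b1.
      S (l,p,q,m) (l,p',q',m) * R $$ (p*b1+q, p'*b1+q'))"
    by (intro sum.cong refl) (simp add: hR sum_distrib_left)
  also have "\<dots> = (\<Sum>l<lA. \<Sum>m<lB. \<Sum>c\<in>?P. \<Sum>c'\<in>?P. ?S l m c c' * R $$ (?h c, ?h c'))"
    by (simp add: sum.cartesian_product')
  finally have link_sum: "(\<Sum>u\<in>box4 lA a2 b2 lB. link a1 b1 S Q u u)
      = (\<Sum>l<lA. \<Sum>m<lB. \<Sum>c\<in>?P. \<Sum>c'\<in>?P. ?S l m c c' * R $$ (?h c, ?h c'))" .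
  have "(\<Sum>x\<in>box4 lA a1 b1 lB. S x x) = (\<Sum>l<lA. \<Sum>p<a1. \<Sum>q<b1. \<Sum>m<lB. S (l,p,q,m) (l,p,q,m))"
    by (simp add: sum_box4)
  also have "\<dots> = (\<Sum>l<lA. \<Sum>m<lB. \<Sum>c\<in>?P. ?S l m c c)"
    by (rule sum.cong[OF refl], subst sum_rotate3[symmetric]) (simp add: sum.cartesian_product')
  finally have diag_sum: "(\<Sum>x\<in>box4 lA a1 b1 lB. S x x) = (\<Sum>l<lA. \<Sum>m<lB. \<Sum>c\<in>?P. ?S l m c c)" .
  have block_psd: "psd_kernel ?P (?S l m)" if "l < lA" "m < lB" for l m
    using psd_kernel_comp[OF finite_box4 S, of ?P "\<lambda>c. (l, fst c, snd c, m)"] that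
    by (auto simp: mem_box4)
  have "Re (\<Sum>u\<in>box4 lA a2 b2 lB. link a1 b1 S Q u u)
      = (\<Sum>l<lA. \<Sum>m<lB. Re (\<Sum>c\<in>?P. \<Sum>c'\<in>?P. ?S l m c c' * R $$ (?h c, ?h c')))"
    unfolding link_sum Re_sum[of _ "{..<lA}"] Re_sum[of _ "{..<lB}"] ..
  also have "\<dots> \<le> (\<Sum>l<lA. \<Sum>m<lB. opnorm R * Re (\<Sum>c\<in>?P. ?S l m c c))"
    by (intro sum_mono Re_sum_psd_kernel_mult_le_opnorm[OF block_psd _ R bij_betw_mixed_radix]) auto
  also have "\<dots> = opnorm R * Re (\<Sum>x\<in>box4 lA a1 b1 lB. S x x)"
    unfolding diag_sum Re_sum[of _ "{..<lA}"] Re_sum[of _ "{..<lB}"] by (simp add: sum_distrib_left)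
  finally show ?thesis .
qed

lemma ptrace_mid_entry:
  assumes "p < a1" "q < b1" "p' < a1" "q' < b1"
  shows "ptrace_mid a1 (a2*b2) b1 Q $$ (p*b1+q, p'*b1+q') = (\<Sum>a<a2. \<Sum>b<b2. kernel4 Q a2 b2 b1 (p,a,b,q) (p',a,b,q'))"
proof -
  have l: "p*b1+q < a1*b1" "p'*b1+q' < a1*b1" using assms by (auto intro: mixed_radix_less)
  have "ptrace_mid a1 (a2*b2) b1 Q $$ (p*b1+q, p'*b1+q') =
     (\<Sum>k<a2*b2. Q $$ ((p*(a2*b2)+k)*b1+q, (p'*(a2*b2)+k)*b1+q'))"
    unfolding ptrace_mid_def using l assms by simp
  also have "\<dots> = (\<Sum>a<a2. \<Sum>b<b2. Q $$ ((p*(a2*b2)+(a*b2+b))*b1+q, (p'*(a2*b2)+(a*b2+b))*b1+q'))"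
    by (rule sum_lessThan_mult)
  also have "\<dots> = (\<Sum>a<a2. \<Sum>b<b2. kernel4 Q a2 b2 b1 (p,a,b,q) (p',a,b,q'))"
    unfolding kernel4_def idx4_eq_mid ..
  finally show ?thesis .
qed

lemma ptrace_mid_carrier[simp]: "ptrace_mid a1 m b1 Q \<in> carrier_mat (a1*b1) (a1*b1)"
  unfolding ptrace_mid_def by simp

lemma kernel4_ext_id_eq_link:
  assumes ch: "is_bipartite_channel a1 b1 a2 b2 N"
    and u: "u \<in> box4 lA a2 b2 lB" and v: "v \<in> box4 lA a2 b2 lB"
  shows "kernel4 (ext_id lA lB (a1*b1) (a2*b2) N \<rho>) a2 b2 lB u v
    = link a1 b1 (kernel4 \<rho> a1 b1 lB) (kernel4 (choi a1 b1 a2 b2 N) a2 b2 b1) u v"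
proof -
  have "kernel4 (ext_id lA lB (a1*b1) (a2*b2) N \<rho>) a2 b2 lB u v
      = link a1 b1 (kernel4 \<rho> a1 b1 lB) (choi_entry a1 b1 b2 N) u v"
    by (rule kernel4_ext_id_eq_link_choi_entry[OF ch u v])
  also have "\<dots> = link a1 b1 (kernel4 \<rho> a1 b1 lB) (kernel4 (choi a1 b1 a2 b2 N) a2 b2 b1) u v"
    by (rule link_cong[OF _ _ u v]) (simp_all add: kernel4_choi)
  finally show ?thesis .
qed

lemma link_kappa_feasible:
  assumes ch: "is_bipartite_channel a1 b1 a2 b2 N"
    and \<rho>: "\<rho> \<in> carrier_mat (lA*a1*b1*lB) (lA*a1*b1*lB)"
    and S: "kappa_feasible (lA*a1) (b1*lB) \<rho> S"
    and Q: "kappa_feasible (a1*a2) (b2*b1) (choi a1 b1 a2 b2 N) Q"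
  shows "kappa_feasible (lA*a2) (b2*lB) (ext_id lA lB (a1*b1) (a2*b2) N \<rho>)
    (mat4 lA a2 b2 lB (link a1 b1 (kernel4 S a1 b1 lB) (kernel4 Q a2 b2 b1)))"
proof -
  let ?BI = "box4 lA a1 b1 lB" and ?BO = "box4 lA a2 b2 lB" and ?BJ = "box4 a1 a2 b2 b1"
  let ?J = "choi a1 b1 a2 b2 N" and ?\<sigma> = "ext_id lA lB (a1*b1) (a2*b2) N \<rho>"
  let ?kS = "kernel4 S a1 b1 lB" and ?kQ = "kernel4 Q a2 b2 b1"
  let ?k\<rho> = "kernel4 \<rho> a1 b1 lB" and ?kJ = "kernel4 ?J a2 b2 b1"
  let ?S' = "mat4 lA a2 b2 lB (link a1 b1 ?kS ?kQ)"
  have Sc: "S \<in> carrier_mat (lA*a1*b1*lB) (lA*a1*b1*lB)" and Sp: "psd S"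
    and S1: "loewner_le (- ptrans2 (lA*a1) (b1*lB) S) (ptrans2 (lA*a1) (b1*lB) \<rho>)"
    and S2: "loewner_le (ptrans2 (lA*a1) (b1*lB) \<rho>) (ptrans2 (lA*a1) (b1*lB) S)"
    using S unfolding kappa_feasible_def mult_assoc4 by auto
  have Qc: "Q \<in> carrier_mat (a1*a2*b2*b1) (a1*a2*b2*b1)" and Qp: "psd Q"
    and Q1: "loewner_le (- ptrans2 (a1*a2) (b2*b1) Q) (ptrans2 (a1*a2) (b2*b1) ?J)"
    and Q2: "loewner_le (ptrans2 (a1*a2) (b2*b1) ?J) (ptrans2 (a1*a2) (b2*b1) Q)"
    using Q unfolding kappa_feasible_def mult_assoc4 by auto
  have \<sigma>c: "?\<sigma> \<in> carrier_mat (lA*a2*b2*lB) (lA*a2*b2*lB)"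
    unfolding ext_id_def by (simp add: mult.assoc)
  have Jc: "?J \<in> carrier_mat (a1*a2*b2*b1) (a1*a2*b2*b1)"
    unfolding choi_def ext_id_def by (simp add: mult.assoc)
  have k\<sigma>: "kernel4 ?\<sigma> a2 b2 lB u v = link a1 b1 ?k\<rho> ?kJ u v" if "u \<in> ?BO" "v \<in> ?BO" for u v
    by (rule kernel4_ext_id_eq_link[OF ch that])
  have kS': "kernel4 ?S' a2 b2 lB u v = link a1 b1 ?kS ?kQ u v" if "u \<in> ?BO" "v \<in> ?BO" for u v
    by (rule kernel4_mat4[OF that])
  note sandwich = psd_kernel_link_sandwich[of lA a1 b1 lB "ptrans_kernel ?k\<rho>" "ptrans_kernel ?kS"
      a2 b2 "ptrans_kernel ?kJ" "ptrans_kernel ?kQ",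
      OF S1[unfolded loewner_le_neg_ptrans2_iff[OF \<rho>]] S2[unfolded loewner_le_ptrans2_iff[OF \<rho>]]
         Q1[unfolded loewner_le_neg_ptrans2_iff[OF Jc]] Q2[unfolded loewner_le_ptrans2_iff[OF Jc]],
      folded ptrans_kernel_link]
  have "psd_kernel ?BO (link a1 b1 ?kS ?kQ)"
    using Sp Qp psd_iff_psd_kernel4[OF Sc] psd_iff_psd_kernel4[OF Qc] psd_kernel_link by blast
  moreover have "psd_kernel ?BO (kernel4 ?S' a2 b2 lB) = psd_kernel ?BO (link a1 b1 ?kS ?kQ)"
    by (rule psd_kernel_cong) (rule kS')
  ultimately have "psd ?S'" using psd_iff_psd_kernel4[OF mat4_carrier] by simp
  moreover have "loewner_le (- ptrans2 (lA*a2) (b2*lB) ?S') (ptrans2 (lA*a2) (b2*lB) ?\<sigma>)"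
    unfolding loewner_le_neg_ptrans2_iff[OF \<sigma>c]
    using sandwich(1) by (rule psd_kernel_cong[THEN iffD1, rotated])
      (simp add: ptrans_kernel_cong[OF k\<sigma>] ptrans_kernel_cong[OF kS'])
  moreover have "loewner_le (ptrans2 (lA*a2) (b2*lB) ?\<sigma>) (ptrans2 (lA*a2) (b2*lB) ?S')"
    unfolding loewner_le_ptrans2_iff[OF \<sigma>c]
    using sandwich(2) by (rule psd_kernel_cong[THEN iffD1, rotated])
      (simp add: ptrans_kernel_cong[OF k\<sigma>] ptrans_kernel_cong[OF kS'])
  ultimately show ?thesis
    unfolding kappa_feasible_def using mat4_carrier[of lA a2 b2 lB] by (simp add: mult_assoc4)
qed

lemma tr_mat4_link_le:
  assumes Sc: "S \<in> carrier_mat (lA*a1*b1*lB) (lA*a1*b1*lB)" and Sp: "psd S"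
  shows "Re (tr (mat4 lA a2 b2 lB (link a1 b1 (kernel4 S a1 b1 lB) (kernel4 Q a2 b2 b1))))
    \<le> opnorm (ptrace_mid a1 (a2*b2) b1 Q) * Re (tr S)"
proof -
  have "tr (mat4 lA a2 b2 lB (link a1 b1 (kernel4 S a1 b1 lB) (kernel4 Q a2 b2 b1)))
      = (\<Sum>u\<in>box4 lA a2 b2 lB. link a1 b1 (kernel4 S a1 b1 lB) (kernel4 Q a2 b2 b1) u u)"
    unfolding tr_eq_sum_kernel4[OF mat4_carrier] by (intro sum.cong refl kernel4_mat4)
  moreover have "psd_kernel (box4 lA a1 b1 lB) (kernel4 S a1 b1 lB)"
    using Sp psd_iff_psd_kernel4[OF Sc] by simp
  ultimately show ?thesis
    unfolding tr_eq_sum_kernel4[OF Sc]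
    using tr_link_le_opnorm[OF _ ptrace_mid_carrier ptrace_mid_entry] by simp
qed

text \<open>The infimum form of \<open>W(\<N>(\<rho>)) \<le> \<parallel>Tr Q\<parallel> W(\<rho>)\<close>, after taking logarithms.\<close>

lemma log_Inf_diff_le:
  fixes A B C :: "real set"
  assumes A: "A \<noteq> {}" and C: "C \<noteq> {}"
    and A1: "\<And>x. x \<in> A \<Longrightarrow> 1 \<le> x" and B1: "\<And>y. y \<in> B \<Longrightarrow> 1 \<le> y"
    and bound: "\<And>r x. r \<in> C \<Longrightarrow> x \<in> A \<Longrightarrow> \<exists>y\<in>B. y \<le> r * x"
  shows "log 2 (Inf B) - log 2 (Inf A) \<le> log 2 (Inf C)"
proof -
  have bB: "bdd_below B" using B1 by (auto simp: bdd_below_def)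
  have InfB: "Inf B \<le> r * x" if "r \<in> C" "x \<in> A" for r x
    using bound[OF that] cInf_lower[OF _ bB] order_trans by blast
  have "B \<noteq> {}" using A C bound by blast
  hence B1': "1 \<le> Inf B" using B1 by (intro cInf_greatest) auto
  have A1': "1 \<le> Inf A" using A A1 by (intro cInf_greatest) auto
  have "Inf B / Inf A \<le> r" if r: "r \<in> C" for r
  proof -
    obtain x where x: "x \<in> A" using A by blast
    have "0 < r"
      using B1' InfB[OF r x] A1[OF x] by (smt (verit) mult_nonpos_nonneg)
    have "Inf B / r \<le> Inf A"
      using InfB[OF r] \<open>0 < r\<close> by (intro cInf_greatest[OF A]) (simp add: divide_le_eq mult.commute)
    thus ?thesis using \<open>0 < r\<close> A1' by (simp add: divide_le_eq field_simps)
  qed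
  hence "Inf B / Inf A \<le> Inf C" using C by (intro cInf_greatest) auto
  moreover have "0 < Inf B / Inf A" using A1' B1' by simp
  ultimately have "log 2 (Inf B / Inf A) \<le> log 2 (Inf C)" by simp
  thus ?thesis using A1' B1' by (simp add: log_divide)
qed

lemma E_kappa_output_minus_input_le:
  assumes ch: "is_bipartite_channel a1 b1 a2 b2 N" and st: "is_state (lA*a1*b1*lB) \<rho>"
  shows "E_kappa_state (lA*a2) (b2*lB) (ext_id lA lB (a1*b1) (a2*b2) N \<rho>)
      - E_kappa_state (lA*a1) (b1*lB) \<rho> \<le> E_kappa_channel a1 b1 a2 b2 N"
proof -
  let ?\<sigma> = "ext_id lA lB (a1*b1) (a2*b2) N \<rho>" and ?J = "choi a1 b1 a2 b2 N"
  have \<rho>c: "\<rho> \<in> carrier_mat (lA*a1*b1*lB) (lA*a1*b1*lB)" and "psd \<rho>" and tr\<rho>: "tr \<rho> = 1"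
    using st unfolding is_state_def by auto
  have \<sigma>c: "?\<sigma> \<in> carrier_mat (lA*a2*b2*lB) (lA*a2*b2*lB)"
    unfolding ext_id_def by (simp add: mult.assoc)
  have Jc: "?J \<in> carrier_mat (a1*a2*b2*b1) (a1*a2*b2*b1)"
    unfolding choi_def ext_id_def by (simp add: mult.assoc)
  have "\<exists>S. kappa_feasible (lA*a1) (b1*lB) \<rho> S"
    using kappa_feasible_exists \<rho>c psd_hermitian_mat[OF \<rho>c \<open>psd \<rho>\<close>] by (simp add: mult_assoc4)
  moreover have "\<exists>Q. kappa_feasible (a1*a2) (b2*b1) ?J Q"
    using kappa_feasible_exists Jc hermitian_mat_if_kernel4[OF choi_kernel4_hermitian[OF ch]]
    by (simp add: mult_assoc4)
  moreover have "Re (tr \<rho>) \<le> Re (tr S)" if "kappa_feasible (lA*a1) (b1*lB) \<rho> S" for S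
    using kappa_feasible_tr_ge[OF that] \<rho>c by (simp add: mult_assoc4)
  moreover have "Re (tr ?\<sigma>) \<le> Re (tr S)" if "kappa_feasible (lA*a2) (b2*lB) ?\<sigma> S" for S
    using kappa_feasible_tr_ge[OF that] \<sigma>c by (simp add: mult_assoc4)
  moreover have "tr ?\<sigma> = 1" using tr_ext_id[OF ch \<rho>c] tr\<rho> by simp
  moreover have "\<exists>S'. kappa_feasible (lA*a2) (b2*lB) ?\<sigma> S' \<and>
      Re (tr S') \<le> opnorm (ptrace_mid a1 (a2*b2) b1 Q) * Re (tr S)"
    if "kappa_feasible (lA*a1) (b1*lB) \<rho> S" "kappa_feasible (a1*a2) (b2*b1) ?J Q" for S Q
  proof -
    have "S \<in> carrier_mat (lA*a1*b1*lB) (lA*a1*b1*lB)" "psd S"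
      using that(1) unfolding kappa_feasible_def mult_assoc4 by auto
    thus ?thesis using link_kappa_feasible[OF ch \<rho>c that] tr_mat4_link_le by blast
  qed
  ultimately show ?thesis
    unfolding E_kappa_state_def W_kappa_eq_Inf_feasible E_kappa_channel_eq_log_Inf_feasible
    using tr\<rho> by (intro log_Inf_diff_le) (fastforce+)
qed

theorem mainTheorem12:
  fixes dA' dB' dA dB :: nat and N :: "complex mat \<Rightarrow> complex mat"
  assumes "is_bipartite_channel dA' dB' dA dB N"
  shows "E_kappa_A_channel dA' dB' dA dB N \<le> ereal (E_kappa_channel dA' dB' dA dB N)"
  unfolding E_kappa_A_channel_def
proof (rule SUP_least)
  fix p assume "p \<in> {(lA, lB, \<rho>) | lA lB \<rho>. is_state (lA*dA'*dB'*lB) \<rho>}"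
  then obtain lA lB \<rho> where p: "p = (lA,lB,\<rho>)" and st: "is_state (lA*dA'*dB'*lB) \<rho>" by blast
  show "(case p of (lA, lB, \<rho>) \<Rightarrow>
          ereal (E_kappa_state (lA*dA) (dB*lB) (ext_id lA lB (dA'*dB') (dA*dB) N \<rho>)
                 - E_kappa_state (lA*dA') (dB'*lB) \<rho>)) \<le> ereal (E_kappa_channel dA' dB' dA dB N)"
    unfolding p using E_kappa_output_minus_input_le[OF assms st] by simp
qed

end
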